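(* There exist a continuous map $f : \mathbb{R}^2 \to \mathbb{R}^2$ and a fixed point $p$ of $f$ such that $p$ has a neighborhood containing no periodic point of $f$ other than $p$, $\{p\}$ is not an isolated invariant set, and $i(f^n,p) = 2^n - 1$ for every $n \ge 1$ (in particular the sequence $\{i(f^n,p)\}_{n\ge1}$ is unbounded).
   Context: $i(g,p)$ is the fixed point index. $\{p\}$ is an isolated invariant set if there is a compact $N$ with $\{p\} = \mathrm{Inv}(f,N) \subset \mathrm{int}(N)$, where $\mathrm{Inv}(f,N)$ is the set of $x \in N$ admitting a sequence $(x_n)_{n\in\mathbb{Z}}\subset N$ with $x_0=x$, $f(x_n)=x_{n+1}$. *)

theory Defs
  imports "HOL-Analysis.Analysis"
begin

text \<open>The plane R^2 is modelled as the complex numbers.\<close>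

definition loop_winding :: "(real \<Rightarrow> complex) \<Rightarrow> int" where
  "loop_winding g = (THE k::int. \<exists>\<theta>::real \<Rightarrow> real. continuous_on {0..1} \<theta> \<and>
      (\<forall>t\<in>{0..1}. g t = complex_of_real (cmod (g t)) * cis (\<theta> t)) \<and>
      \<theta> 1 - \<theta> 0 = 2 * pi * real_of_int k)"

definition fixed_point_index :: "(complex \<Rightarrow> complex) \<Rightarrow> complex \<Rightarrow> int" where
  "fixed_point_index f p = (THE k::int. \<exists>\<epsilon>>0. \<forall>r. 0 < r \<and> r < \<epsilon> \<longrightarrow>
      loop_winding (\<lambda>t. (p + complex_of_real r * cis (2 * pi * t))
                         - f (p + complex_of_real r * cis (2 * pi * t))) = k)"

definition Inv :: "('a \<Rightarrow> 'a) \<Rightarrow> 'a set \<Rightarrow> 'a set" where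
  "Inv f N = {x \<in> N. \<exists>xs::int \<Rightarrow> 'a. xs 0 = x \<and> (\<forall>n. xs n \<in> N \<and> f (xs n) = xs (n + 1))}"

definition isolated_invariant_set :: "('a::topological_space \<Rightarrow> 'a) \<Rightarrow> 'a set \<Rightarrow> bool" where
  "isolated_invariant_set f S \<longleftrightarrow> (\<exists>N. compact N \<and> S = Inv f N \<and> S \<subseteq> interior N)"

definition periodic_point :: "('a \<Rightarrow> 'a) \<Rightarrow> 'a \<Rightarrow> bool" where
  "periodic_point f x \<longleftrightarrow> (\<exists>n\<ge>1. (f ^^ n) x = x)"

end

theory Submission
  imports Defs
begin

text \<open>
  The map is radial, \<open>f (r w) = r f w\<close> for \<open>r \<ge> 0\<close> and \<open>|w| = 1\<close>. On the unit circle it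
  quadruples the angle with gain \<open>2\<close> on the left half circle, collapses the arcs around the
  directions \<open>turn (\<plusminus>1/8)\<close> onto these attracting directions with gain \<open>2\<close>, and has gain \<open>0\<close> on
  the rest of the right half circle. A nonzero periodic orbit would need total gain \<open>1\<close>, whereas
  an angle that returns after \<open>n\<close> steps without being killed collects gain \<open>2\<^sup>n\<close>; so \<open>0\<close> is the
  only periodic point. An orbit emanating from \<open>0\<close> along the left half circle and dying on the
  positive real axis stays in any given neighbourhood of \<open>0\<close>, so \<open>{0}\<close> is not an isolated invariant
  set.

  The index of \<open>f\<^sup>n\<close> at \<open>0\<close> is the degree of \<open>z - f\<^sup>n z = z (1 - f\<^sup>n z / z)\<close> on a small circle:
  \<open>1\<close> for the factor \<open>z\<close> plus the signed number of crossings of \<open>1 - f\<^sup>n z / z\<close> with the negative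
  real axis. These happen only where \<open>f\<^sup>n z / z\<close> is real and \<open>\<ge> 1\<close>, namely once counterclockwise on
  each of the \<open>2\<^sup>n\<close> horseshoe intervals and once clockwise on each of the two arcs around the sinks,
  giving \<open>i(f\<^sup>n, 0) = 1 + 2\<^sup>n - 2\<close>.
\<close>

section \<open>Continuous arguments and winding numbers\<close>

definition arg_lift_on :: "(real \<Rightarrow> complex) \<Rightarrow> (real \<Rightarrow> real) \<Rightarrow> real \<Rightarrow> real \<Rightarrow> bool" where
  "arg_lift_on v \<theta> a b \<longleftrightarrow> continuous_on {a..b} \<theta> \<and>
     (\<forall>t\<in>{a..b}. v t = complex_of_real (cmod (v t)) * cis (\<theta> t))"

text \<open>\<open>net_crossings v a b k\<close>: along \<open>[a, b]\<close> the argument of \<open>v\<close> increases by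
  \<open>Arg (v b) - Arg (v a) + 2\<pi>k\<close>, i.e. \<open>v\<close> crosses the branch cut \<open>\<real>\<^sub>\<le>\<^sub>0\<close> of \<open>Arg\<close>
  \<open>k\<close> times counterclockwise, counted with sign.\<close>
definition net_crossings :: "(real \<Rightarrow> complex) \<Rightarrow> real \<Rightarrow> real \<Rightarrow> int \<Rightarrow> bool" where
  "net_crossings v a b k \<longleftrightarrow>
     (\<exists>\<theta>. arg_lift_on v \<theta> a b \<and> \<theta> b - \<theta> a = Arg (v b) - Arg (v a) + 2 * pi * k)"

lemma polar_angle_unique:
  assumes "z = complex_of_real (cmod z) * cis x" "z = complex_of_real (cmod z) * cis y" "z \<noteq> 0"
  shows "\<exists>m::int. x = y + 2 * pi * m"
proof -
  have "cis x = cis y"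
    using assms by (metis mult_cancel_left of_real_eq_0_iff norm_eq_zero)
  then have "sin x = sin y \<and> cos x = cos y"
    by (metis cis.sel)
  then show ?thesis
    using sin_cos_eq_iff by blast
qed

lemma polar_Arg: "z = complex_of_real (cmod z) * cis (Arg z)"
  by (metis rcis_cmod_Arg rcis_def)

lemma arg_lift_on_Arg:
  assumes "continuous_on {a..b} v" and "\<And>t. t \<in> {a..b} \<Longrightarrow> v t \<notin> \<real>\<^sub>\<le>\<^sub>0"
  shows "arg_lift_on v (\<lambda>t. Arg (v t)) a b"
proof -
  have "continuous_on {a..b} (\<lambda>t. Arg (v t))"
    by (intro continuous_intros assms)
  then show ?thesis
    unfolding arg_lift_on_def using polar_Arg by blast
qed

lemma arg_lift_on_congruent:
  assumes "arg_lift_on v \<theta>1 a b" "arg_lift_on v \<theta>2 c d" "t \<in> {a..b}" "t \<in> {c..d}" "v t \<noteq> 0"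
  shows "\<exists>m::int. \<theta>1 t = \<theta>2 t + 2 * pi * m"
proof -
  have "v t = complex_of_real (cmod (v t)) * cis (\<theta>1 t)" "v t = complex_of_real (cmod (v t)) * cis (\<theta>2 t)"
    using assms(1-4) unfolding arg_lift_on_def by auto
  then show ?thesis
    using polar_angle_unique assms(5) by blast
qed

lemma arg_lift_on_Arg_point:
  assumes "arg_lift_on v \<theta> a b" "t \<in> {a..b}" "v t \<noteq> 0"
  shows "\<exists>m::int. \<theta> t = Arg (v t) + 2 * pi * m"
  using assms polar_angle_unique[OF _ polar_Arg] unfolding arg_lift_on_def by blast

lemma arg_lift_on_join:
  assumes l1: "arg_lift_on v \<theta>1 a b" and l2: "arg_lift_on v \<theta>2 b c" and "a \<le> b" "b \<le> c"
    and nz: "v b \<noteq> 0"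
  shows "\<exists>\<theta>. arg_lift_on v \<theta> a c \<and> \<theta> c - \<theta> a = (\<theta>1 b - \<theta>1 a) + (\<theta>2 c - \<theta>2 b)"
proof -
  obtain m :: int where m: "\<theta>1 b = \<theta>2 b + 2 * pi * m"
    using arg_lift_on_congruent[OF l1 l2 _ _ nz] \<open>a \<le> b\<close> \<open>b \<le> c\<close> by auto
  define \<theta> where "\<theta> t = (if t \<le> b then \<theta>1 t else \<theta>2 t + 2 * pi * m)" for t
  have "continuous_on {x \<in> {a..c}. x \<le> b} \<theta>1" "continuous_on {x \<in> {a..c}. b \<le> x} \<theta>2"
    using l1 l2 unfolding arg_lift_on_def by (auto elim: continuous_on_subset)
  then have "continuous_on {a..c} \<theta>"
    unfolding \<theta>_def by (intro continuous_on_cases_le continuous_intros) (auto simp: m)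
  moreover have "v t = complex_of_real (cmod (v t)) * cis (\<theta> t)" if "t \<in> {a..c}" for t
    using l1 l2 that unfolding arg_lift_on_def \<theta>_def by (auto simp: cis_mult[symmetric])
  moreover have "\<theta> c - \<theta> a = (\<theta>1 b - \<theta>1 a) + (\<theta>2 c - \<theta>2 b)"
    using assms m unfolding \<theta>_def by auto
  ultimately show ?thesis
    unfolding arg_lift_on_def by blast
qed

text \<open>Two lifts differ by a continuous function with values in \<open>2\<pi>\<int>\<close>, hence by a constant.\<close>
lemma arg_lift_on_increment_unique:
  assumes l1: "arg_lift_on v \<theta>1 a b" and l2: "arg_lift_on v \<theta>2 a b" and "a \<le> b"
    and nz: "\<And>t. t \<in> {a..b} \<Longrightarrow> v t \<noteq> 0"
  shows "\<theta>1 b - \<theta>1 a = \<theta>2 b - \<theta>2 a"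
proof -
  define h where "h t = (\<theta>1 t - \<theta>2 t) / (2 * pi)" for t
  have h_int: "h t \<in> \<int>" if t: "t \<in> {a..b}" for t
  proof -
    obtain m :: int where "\<theta>1 t = \<theta>2 t + 2 * pi * m"
      using arg_lift_on_congruent[OF l1 l2 t t nz[OF t]] by blast
    then show ?thesis
      unfolding h_def by simp
  qed
  have "continuous_on {a..b} h"
    unfolding h_def using l1 l2 unfolding arg_lift_on_def by (intro continuous_intros) auto
  then have "h constant_on {a..b}"
  proof (rule continuous_discrete_range_constant[OF connected_Icc])
    fix x assume x: "x \<in> {a..b}"
    show "\<exists>e>0. \<forall>y. y \<in> {a..b} \<and> h y \<noteq> h x \<longrightarrow> e \<le> norm (h y - h x)"
    proof (intro exI[of _ 1] conjI allI impI)
      fix y assume y: "y \<in> {a..b} \<and> h y \<noteq> h x"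
      then obtain k :: int where "h y - h x = k" "k \<noteq> 0"
        using h_int x by (metis Ints_cases Ints_diff eq_iff_diff_eq_0 of_int_0)
      then show "1 \<le> norm (h y - h x)"
        by simp
    qed simp
  qed
  then have "h a = h b"
    using assms unfolding constant_on_def by auto
  then show ?thesis
    unfolding h_def by (simp add: field_simps)
qed

lemma net_crossings_Arg:
  assumes "continuous_on {a..b} v" and "\<And>t. t \<in> {a..b} \<Longrightarrow> v t \<notin> \<real>\<^sub>\<le>\<^sub>0"
  shows "net_crossings v a b 0"
  unfolding net_crossings_def using arg_lift_on_Arg[OF assms] by auto

lemma net_crossings_join:
  assumes "net_crossings v a b k" "net_crossings v b c l" "a \<le> b" "b \<le> c" "v b \<noteq> 0"
  shows "net_crossings v a c (k + l)"
proof -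
  obtain \<theta>1 \<theta>2 where "arg_lift_on v \<theta>1 a b" "\<theta>1 b - \<theta>1 a = Arg (v b) - Arg (v a) + 2 * pi * k"
    and "arg_lift_on v \<theta>2 b c" "\<theta>2 c - \<theta>2 b = Arg (v c) - Arg (v b) + 2 * pi * l"
    using assms(1,2) unfolding net_crossings_def by blast
  with arg_lift_on_join[of v \<theta>1 a b \<theta>2 c] assms(3-5) show ?thesis
    unfolding net_crossings_def by (auto simp: algebra_simps)
qed

lemma net_crossings_sum:
  fixes P :: "(real \<times> real) set" and \<epsilon> :: "real \<times> real \<Rightarrow> int"
  assumes "finite P"
    and "\<forall>p\<in>P. a < fst p \<and> fst p < snd p \<and> snd p < b"
    and "\<forall>p\<in>P. \<forall>q\<in>P. p \<noteq> q \<longrightarrow> snd p < fst q \<or> snd q < fst p"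
    and "continuous_on {a..b} v"
    and "\<forall>t\<in>{a..b}. (\<forall>p\<in>P. t \<notin> {fst p<..<snd p}) \<longrightarrow> v t \<notin> \<real>\<^sub>\<le>\<^sub>0"
    and "\<forall>p\<in>P. net_crossings v (fst p) (snd p) (\<epsilon> p)"
    and "a \<le> b"
  shows "net_crossings v a b (\<Sum>p\<in>P. \<epsilon> p)"
  using assms
proof (induction "card P" arbitrary: P a rule: less_induct)
  case less
  show ?case
  proof (cases "P = {}")
    case True
    then show ?thesis
      using less.prems by (auto intro: net_crossings_Arg)
  next
    case False
    have "Min (fst ` P) \<in> fst ` P"
      using False less.prems(1) by simp
    then obtain p0 where p0: "p0 \<in> P" "fst p0 = Min (fst ` P)"
      by auto
    then have first: "\<forall>p\<in>P. fst p0 \<le> fst p"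
      using less.prems(1) by simp
    have p0b: "a < fst p0" "fst p0 < snd p0" "snd p0 < b"
      using less.prems(2) p0 by auto
    define P' where "P' = P - {p0}"
    have after: "snd p0 < fst p" if "p \<in> P'" for p
    proof -
      have "p \<in> P" "p \<noteq> p0" "fst p < snd p"
        using that less.prems(2) unfolding P'_def by auto
      then show ?thesis
        using less.prems(3) p0(1) first by fastforce
    qed
    have free: "v t \<notin> \<real>\<^sub>\<le>\<^sub>0"
      if "t \<in> {a..b}" "t \<notin> {fst p0<..<snd p0}" "\<forall>p\<in>P'. t \<notin> {fst p<..<snd p}" for t
      using less.prems(5) that unfolding P'_def by blast
    have "net_crossings v a (fst p0) 0"
    proof (rule net_crossings_Arg)
      show "continuous_on {a..fst p0} v"
        using less.prems(4) p0b by (auto elim: continuous_on_subset)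
      fix t assume "t \<in> {a..fst p0}"
      then show "v t \<notin> \<real>\<^sub>\<le>\<^sub>0"
        using free[of t] first p0b unfolding P'_def by fastforce
    qed
    moreover have "net_crossings v (fst p0) (snd p0) (\<epsilon> p0)"
      using less.prems(6) p0 by blast
    moreover have "net_crossings v (snd p0) b (\<Sum>p\<in>P'. \<epsilon> p)"
    proof (rule less.hyps)
      show "card P' < card P"
        unfolding P'_def using p0 less.prems(1) by (metis card_Diff1_less)
      show "\<forall>p\<in>P'. snd p0 < fst p \<and> fst p < snd p \<and> snd p < b"
        using after less.prems(2) unfolding P'_def by auto
      show "continuous_on {snd p0..b} v"
        using less.prems(4) p0b by (auto elim: continuous_on_subset)
      show "\<forall>t\<in>{snd p0..b}. (\<forall>p\<in>P'. t \<notin> {fst p<..<snd p}) \<longrightarrow> v t \<notin> \<real>\<^sub>\<le>\<^sub>0"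
        using free p0b by auto
    qed (use less.prems p0b in \<open>auto simp: P'_def\<close>)
    moreover have "v (fst p0) \<noteq> 0" "v (snd p0) \<noteq> 0"
      using free[of "fst p0"] free[of "snd p0"] after p0b by fastforce+
    moreover have "(\<Sum>p\<in>P. \<epsilon> p) = (0 + \<epsilon> p0) + (\<Sum>p\<in>P'. \<epsilon> p)"
      unfolding P'_def using p0 less.prems(1) by (simp add: sum.remove)
    ultimately show ?thesis
      using p0b net_crossings_join[of v a "fst p0"] net_crossings_join[of v a "snd p0"] by fastforce
  qed
qed

lemma loop_winding_eqI:
  assumes l: "arg_lift_on v \<theta> 0 1" and nz: "\<And>t. t \<in> {0..1} \<Longrightarrow> v t \<noteq> 0"
    and e: "\<theta> 1 - \<theta> 0 = 2 * pi * real_of_int k"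
  shows "loop_winding v = k"
  unfolding loop_winding_def
proof (rule the_equality)
  show "\<exists>\<theta>. continuous_on {0..1} \<theta> \<and> (\<forall>t\<in>{0..1}. v t = complex_of_real (cmod (v t)) * cis (\<theta> t)) \<and>
        \<theta> 1 - \<theta> 0 = 2 * pi * real_of_int k"
    using l e unfolding arg_lift_on_def by blast
next
  fix k' :: int
  assume "\<exists>\<theta>. continuous_on {0..1} \<theta> \<and> (\<forall>t\<in>{0..1}. v t = complex_of_real (cmod (v t)) * cis (\<theta> t)) \<and>
        \<theta> 1 - \<theta> 0 = 2 * pi * real_of_int k'"
  then obtain \<theta>' where "arg_lift_on v \<theta>' 0 1" "\<theta>' 1 - \<theta>' 0 = 2 * pi * real_of_int k'"
    unfolding arg_lift_on_def by blast
  with arg_lift_on_increment_unique[OF _ l _ nz] e show "k' = k"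
    by simp
qed

lemma loop_winding_cis_mult:
  assumes "net_crossings v 0 1 k" "v 1 = v 0" "\<And>t. t \<in> {0..1} \<Longrightarrow> v t \<noteq> 0" "0 < r"
  shows "loop_winding (\<lambda>t. complex_of_real r * cis (2 * pi * t) * v t) = k + 1"
proof -
  obtain \<theta> where l: "arg_lift_on v \<theta> 0 1" and e: "\<theta> 1 - \<theta> 0 = 2 * pi * k"
    using assms(1,2) unfolding net_crossings_def by auto
  have "continuous_on {0..1} (\<lambda>t. 2 * pi * t + \<theta> t)"
    using l unfolding arg_lift_on_def by (intro continuous_intros) auto
  moreover have "complex_of_real r * cis (2 * pi * t) * v t
      = complex_of_real (cmod (complex_of_real r * cis (2 * pi * t) * v t)) * cis (2 * pi * t + \<theta> t)"
    if "t \<in> {0..1}" for t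
  proof -
    have "v t = complex_of_real (cmod (v t)) * cis (\<theta> t)"
      using l that unfolding arg_lift_on_def by blast
    then show ?thesis
      using \<open>0 < r\<close> by (simp add: norm_mult cis_mult[symmetric] mult_ac)
  qed
  ultimately have "arg_lift_on (\<lambda>t. complex_of_real r * cis (2 * pi * t) * v t) (\<lambda>t. 2 * pi * t + \<theta> t) 0 1"
    unfolding arg_lift_on_def by blast
  moreover have "(2 * pi * 1 + \<theta> 1) - (2 * pi * 0 + \<theta> 0) = 2 * pi * real_of_int (k + 1)"
    using e by (simp add: algebra_simps)
  ultimately show ?thesis
    using assms(3,4) by (intro loop_winding_eqI) auto
qed

section \<open>Angles measured in turns\<close>

definition turn :: "real \<Rightarrow> complex" where
  "turn t = cis (2 * pi * t)"

lemma Re_turn: "Re (turn t) = cos (2 * pi * t)"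
  and Im_turn: "Im (turn t) = sin (2 * pi * t)"
  unfolding turn_def by simp_all

lemma norm_turn [simp]: "cmod (turn t) = 1"
  unfolding turn_def by simp

lemma turn_nonzero [simp]: "turn t \<noteq> 0"
  using norm_turn[of t] by (metis norm_zero zero_neq_one)

lemma turn_add: "turn a * turn b = turn (a + b)"
  unfolding turn_def by (simp add: cis_mult algebra_simps)

lemma turn_int_shift: "k \<in> \<int> \<Longrightarrow> turn (t + k) = turn t"
  unfolding turn_def by (simp add: distrib_left cis_mult[symmetric])

lemma turn_power4: "turn t ^ 4 = turn (4 * t)"
  unfolding turn_def using Complex.DeMoivre[of "2 * pi * t" 4] by (simp add: algebra_simps)

lemma turn_eq_turnD:
  assumes "turn a = turn b"
  shows "\<exists>m::int. a = b + m"
proof -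
  obtain m :: int where "2 * pi * a = 2 * pi * b + 2 * pi * m"
    using assms polar_angle_unique[of "turn a"] unfolding turn_def by force
  then have "2 * pi * a = 2 * pi * (b + m)"
    by (simp add: algebra_simps)
  then show ?thesis
    by auto
qed

lemma norm_scaled_turn [simp]: "cmod (complex_of_real a * turn t) = \<bar>a\<bar>"
  by (simp add: norm_mult)

lemma sgn_scaled_turn: "0 < \<rho> \<Longrightarrow> sgn (complex_of_real \<rho> * turn t) = turn t"
  by (simp add: sgn_div_norm scaleR_conv_of_real)

lemma polar_turn: "z = complex_of_real (cmod z) * turn (Arg z / (2 * pi))"
  using polar_Arg[of z] unfolding turn_def by simp

lemma scaled_turn_eq_iff:
  assumes "0 \<le> a" "0 < b"
  shows "complex_of_real a * turn s = complex_of_real b * turn t \<longleftrightarrow> a = b \<and> turn s = turn t"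
proof
  assume eq: "complex_of_real a * turn s = complex_of_real b * turn t"
  then have "a = b"
    using assms by (metis abs_of_nonneg less_imp_le norm_scaled_turn)
  with eq assms show "a = b \<and> turn s = turn t"
    by simp
qed simp

lemma abs_Re_Im_turn_le_1: "\<bar>Re (turn t)\<bar> \<le> 1" "\<bar>Im (turn t)\<bar> \<le> 1"
  unfolding Re_turn Im_turn by simp_all

lemma cos_2pi_int_shift: "k \<in> \<int> \<Longrightarrow> cos (2 * pi * (y + k)) = cos (2 * pi * y)"
  using turn_int_shift[of k y] Re_turn by metis

lemma cos_2pi_pos:
  assumes "0 \<le> t" "t < 1/4"
  shows "0 < cos (2 * pi * t)"
proof -
  have "2 * pi * t < 2 * pi * (1/4)"
    using assms by (intro mult_strict_left_mono) auto
  moreover have "0 \<le> 2 * pi * t"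
    using assms by simp
  ultimately show ?thesis
    using pi_gt_zero by (intro cos_gt_zero_pi) linarith+
qed

lemma cos_2pi_nonpos_iff:
  assumes "0 \<le> t" "t \<le> 1"
  shows "cos (2 * pi * t) \<le> 0 \<longleftrightarrow> 1/4 \<le> t \<and> t \<le> 3/4"
proof
  assume "cos (2 * pi * t) \<le> 0"
  moreover have "cos (2 * pi * t) = cos (2 * pi * (1 - t))"
    by (simp add: right_diff_distrib cos_diff)
  ultimately show "1/4 \<le> t \<and> t \<le> 3/4"
    using assms cos_2pi_pos[of t] cos_2pi_pos[of "1 - t"] by force
next
  assume "1/4 \<le> t \<and> t \<le> 3/4"
  then have "0 \<le> cos (2 * pi * t - pi)"
    by (intro cos_ge_zero) (auto simp: field_simps)
  then show "cos (2 * pi * t) \<le> 0"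
    by (simp add: cos_diff)
qed

section \<open>Crossings of the negative real axis\<close>

lemma int_eq_of_two_pi_bounds:
  fixes m k :: int
  assumes "2 * pi * k - 3 * pi / 2 < 2 * pi * m" "2 * pi * m < 2 * pi * k + 3 * pi / 2"
  shows "m = k"
proof -
  have "pi * (real_of_int k - 3/4) < pi * m" "pi * m < pi * (real_of_int k + 3/4)"
    using assms by (simp_all add: algebra_simps)
  then have "real_of_int k - 3/4 < m" "m < real_of_int k + 3/4"
    by (simp_all add: mult_less_cancel_left_pos)
  then show ?thesis
    by linarith
qed

lemma one_minus_cis_notin_nonpos_Reals:
  assumes "0 < A" "-pi < \<phi>" "\<phi> < pi" "\<phi> \<noteq> 0"
  shows "1 - complex_of_real A * cis \<phi> \<notin> \<real>\<^sub>\<le>\<^sub>0"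
proof -
  have "sin \<phi> \<noteq> 0"
    using assms sin_gt_zero[of \<phi>] sin_gt_zero[of "- \<phi>"] by (cases "0 < \<phi>") auto
  then show ?thesis
    using assms(1) by (auto simp: complex_nonpos_Reals_iff)
qed

text \<open>For \<open>A > 1\<close> write \<open>1 - A cis \<phi> = -A cis \<phi> \<cdot> (1 - cis (-\<phi>) / A)\<close>: the last factor has
  positive real part, so \<open>\<phi> + \<pi> + Arg (1 - cis (-\<phi>) / A)\<close> is a lift within \<open>\<pi>/2\<close> of \<open>\<phi> + \<pi>\<close>.\<close>
lemma arg_lift_on_one_minus_cis:
  assumes A: "1 < A" and cont: "continuous_on {\<alpha>..\<beta>} \<phi>"
    and v: "\<And>t. t \<in> {\<alpha>..\<beta>} \<Longrightarrow> v t = 1 - complex_of_real A * cis (\<phi> t)"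
  obtains \<psi> where "arg_lift_on v \<psi> \<alpha> \<beta>" "\<And>t. \<bar>\<psi> t - (\<phi> t + pi)\<bar> < pi / 2"
proof -
  define q where "q t = 1 - cis (- \<phi> t) / complex_of_real A" for t
  define \<psi> where "\<psi> t = \<phi> t + pi + Arg (q t)" for t
  have Re_q: "0 < Re (q t)" for t
  proof -
    have "Re (cis (- \<phi> t) / complex_of_real A) = cos (\<phi> t) / A"
      by (simp add: Re_divide_of_real)
    also have "\<dots> \<le> 1 / A"
      using A by (intro divide_right_mono) auto
    also have "\<dots> < 1"
      using A by simp
    finally show ?thesis
      unfolding q_def by simp
  qed
  have "continuous_on {\<alpha>..\<beta>} \<psi>"
  proof -
    have "q t \<notin> \<real>\<^sub>\<le>\<^sub>0" for t
      using Re_q[of t] by (auto simp: complex_nonpos_Reals_iff)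
    then show ?thesis
      unfolding \<psi>_def using A cont unfolding q_def by (intro continuous_intros) auto
  qed
  moreover have "v t = complex_of_real (cmod (v t)) * cis (\<psi> t)" if "t \<in> {\<alpha>..\<beta>}" for t
  proof -
    have v_q: "v t = - (complex_of_real A * cis (\<phi> t) * q t)"
      unfolding v[OF that] q_def using A by (simp add: field_simps cis_mult)
    have "- (cis (\<phi> t) * cis (Arg (q t))) = cis (\<psi> t)"
      unfolding \<psi>_def by (simp add: cis_mult[symmetric] add.assoc)
    moreover have "cmod (v t) = A * cmod (q t)"
      using A v_q by (simp add: norm_mult)
    ultimately show ?thesis
      using v_q polar_Arg[of "q t"]
      by (metis (no_types, lifting) mult.assoc mult.left_commute mult_minus_left of_real_mult)
  qed
  ultimately have "arg_lift_on v \<psi> \<alpha> \<beta>"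
    unfolding arg_lift_on_def by blast
  moreover have "\<bar>\<psi> t - (\<phi> t + pi)\<bar> < pi / 2" for t
    using Arg_Re_pos[of "q t"] Re_q[of t] unfolding \<psi>_def by simp
  ultimately show ?thesis
    using that by blast
qed

lemma net_crossings_one_minus_cis:
  assumes A: "1 < A" and "\<alpha> \<le> \<beta>" and cont: "continuous_on {\<alpha>..\<beta>} \<phi>"
    and v: "\<And>t. t \<in> {\<alpha>..\<beta>} \<Longrightarrow> v t = 1 - complex_of_real A * cis (\<phi> t)"
    and ends: "\<And>s. s \<in> {\<alpha>, \<beta>} \<Longrightarrow> -pi < \<phi> s \<and> \<phi> s < pi \<and> \<phi> s \<noteq> 0"
  shows "net_crossings v \<alpha> \<beta> (of_bool (0 < \<phi> \<beta>) - of_bool (0 < \<phi> \<alpha>))"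
proof -
  obtain \<psi> where lift: "arg_lift_on v \<psi> \<alpha> \<beta>" and near: "\<And>t. \<bar>\<psi> t - (\<phi> t + pi)\<bar> < pi / 2"
    using arg_lift_on_one_minus_cis[OF A cont v] by blast
  have end_value: "\<psi> s = Arg (v s) + 2 * pi * of_bool (0 < \<phi> s)" if s: "s \<in> {\<alpha>, \<beta>}" for s
  proof -
    have s_in: "s \<in> {\<alpha>..\<beta>}"
      using s \<open>\<alpha> \<le> \<beta>\<close> by auto
    have Im_v: "Im (v s) = - A * sin (\<phi> s)"
      using v[OF s_in] by simp
    have "v s \<noteq> 0"
      using one_minus_cis_notin_nonpos_Reals[of A "\<phi> s"] ends[OF s] A v[OF s_in] by auto
    then obtain m :: int where m: "\<psi> s = Arg (v s) + 2 * pi * m"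
      using arg_lift_on_Arg_point[OF lift s_in] by blast
    have bounds: "\<phi> s + pi / 2 < \<psi> s" "\<psi> s < \<phi> s + 3 * pi / 2" "- pi < \<phi> s" "\<phi> s < pi"
      using near[of s] ends[OF s] unfolding abs_less_iff by linarith+
    have "m = of_bool (0 < \<phi> s)"
    proof (cases "0 < \<phi> s")
      case True
      then have "Im (v s) < 0"
        using Im_v ends[OF s] sin_gt_zero[of "\<phi> s"] A by simp
      then have "-pi < Arg (v s)" "Arg (v s) < 0"
        using Arg_less_0[of "v s"] Arg_bounded[of "v s"] by linarith+
      with bounds have "m = 1"
        using m True by (intro int_eq_of_two_pi_bounds; simp only: of_int_1; linarith)
      then show ?thesis
        using True by simp
    next
      case False
      then have "0 < Im (v s)"
        using Im_v ends[OF s] sin_gt_zero[of "- \<phi> s"] A by (simp add: mult_pos_neg)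
      then have "0 < Arg (v s)" "Arg (v s) < pi"
        using Arg_lt_pi by blast+
      with bounds have "m = 0"
        using m False by (intro int_eq_of_two_pi_bounds; simp only: of_int_0; linarith)
      then show ?thesis
        using False by simp
    qed
    with m show ?thesis
      by simp
  qed
  show ?thesis
    unfolding net_crossings_def using lift end_value[of \<alpha>] end_value[of \<beta>]
    by (intro exI[of _ \<psi>]) (simp add: algebra_simps)
qed

lemma net_crossings_one_minus_turn:
  assumes "1 < A" "\<alpha> \<le> \<beta>" "continuous_on {\<alpha>..\<beta>} \<theta>"
    and "\<And>t. t \<in> {\<alpha>..\<beta>} \<Longrightarrow> v t = 1 - complex_of_real A * turn (\<theta> t)"
    and ends: "\<And>s. s \<in> {\<alpha>, \<beta>} \<Longrightarrow> -1/2 < \<theta> s \<and> \<theta> s < 1/2 \<and> \<theta> s \<noteq> 0"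
  shows "v \<alpha> \<notin> \<real>\<^sub>\<le>\<^sub>0 \<and> v \<beta> \<notin> \<real>\<^sub>\<le>\<^sub>0 \<and> net_crossings v \<alpha> \<beta> (of_bool (0 < \<theta> \<beta>) - of_bool (0 < \<theta> \<alpha>))"
proof -
  have ends_cis: "-pi < 2 * pi * \<theta> s \<and> 2 * pi * \<theta> s < pi \<and> 2 * pi * \<theta> s \<noteq> 0" if "s \<in> {\<alpha>, \<beta>}" for s
  proof -
    have "pi * (-1) < pi * (2 * \<theta> s)" "pi * (2 * \<theta> s) < pi * 1"
      using ends[OF that] by (intro mult_strict_left_mono; simp)+
    then show ?thesis
      using ends[OF that] by simp
  qed
  then have "net_crossings v \<alpha> \<beta> (of_bool (0 < 2 * pi * \<theta> \<beta>) - of_bool (0 < 2 * pi * \<theta> \<alpha>))"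
    using assms(1-4) unfolding turn_def by (intro net_crossings_one_minus_cis) (auto intro: continuous_intros)
  moreover have "v s \<notin> \<real>\<^sub>\<le>\<^sub>0" if "s \<in> {\<alpha>, \<beta>}" for s
    using one_minus_cis_notin_nonpos_Reals[of A "2 * pi * \<theta> s"] ends_cis[OF that] assms(1,2,4) that
    unfolding turn_def by auto
  ultimately show ?thesis
    by (simp add: zero_less_mult_iff)
qed

section \<open>The map\<close>

definition clamp01 :: "real \<Rightarrow> real" where
  "clamp01 s = max 0 (min 1 s)"

text \<open>\<open>diag \<sigma> w / \<surd>2\<close> is the component of \<open>w\<close> in the direction \<open>turn (\<sigma> / 8)\<close>. On the unit circle
  the gain is \<open>2\<close> on the left half and near \<open>turn (\<plusminus>1/8)\<close> (where \<open>diag \<sigma> w \<ge> 34/25\<close>), and \<open>0\<close>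
  on the rest of the right half apart from the transition ramps.\<close>
definition diag :: "real \<Rightarrow> complex \<Rightarrow> real" where
  "diag \<sigma> w = Re w + \<sigma> * Im w"

definition gain :: "complex \<Rightarrow> real" where
  "gain w = 2 * clamp01 (1 - 10 * Re w) + 2 * clamp01 (100 * (diag 1 w - 27/20))
     + 2 * clamp01 (100 * (diag (-1) w - 27/20))"

definition direction_map :: "complex \<Rightarrow> complex" where
  "direction_map w = (if 27/20 < diag 1 w then turn (1/8)
     else if 27/20 < diag (-1) w then turn (-1/8) else w ^ 4)"

definition horseshoe_map :: "complex \<Rightarrow> complex" where
  "horseshoe_map z = complex_of_real (cmod z * gain (sgn z)) * direction_map (sgn z)"

definition in_sink_zone :: "real \<Rightarrow> bool" where
  "in_sink_zone t \<longleftrightarrow> 27/20 < diag 1 (turn t) \<or> 27/20 < diag (-1) (turn t)"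

definition angle_map :: "real \<Rightarrow> real" where
  "angle_map t = (if 27/20 < diag 1 (turn t) then 1/8
     else if 27/20 < diag (-1) (turn t) then -1/8 else 4 * t)"

fun orbit_gain :: "nat \<Rightarrow> real \<Rightarrow> real" where
  "orbit_gain 0 t = 1"
| "orbit_gain (Suc n) t = gain (turn t) * orbit_gain n (angle_map t)"

lemma clamp01_eq_0: "s \<le> 0 \<Longrightarrow> clamp01 s = 0"
  and clamp01_eq_1: "1 \<le> s \<Longrightarrow> clamp01 s = 1"
  and clamp01_bounds: "0 \<le> clamp01 s" "clamp01 s \<le> 1"
  and clamp01_pos_iff: "0 < clamp01 s \<longleftrightarrow> 0 < s"
  unfolding clamp01_def by auto

lemma gain_nonneg: "0 \<le> gain w"
  unfolding gain_def using clamp01_bounds by (simp add: add_nonneg_nonneg)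

lemma gain_le_6: "gain w \<le> 6"
  unfolding gain_def using clamp01_bounds(2) by (smt (verit, best))

lemma orbit_gain_nonneg: "0 \<le> orbit_gain n t"
  by (induction n arbitrary: t) (auto simp: gain_nonneg)

lemma angle_map_sink_zone: "in_sink_zone x \<Longrightarrow> angle_map x = 1/8 \<or> angle_map x = -1/8"
  unfolding in_sink_zone_def angle_map_def by auto

lemma angle_map_outside_sink_zone: "\<not> in_sink_zone x \<Longrightarrow> angle_map x = 4 * x"
  unfolding in_sink_zone_def angle_map_def by auto

lemma gain_outside_sink_zone:
  assumes "\<not> in_sink_zone x" "gain (turn x) \<noteq> 0"
  shows "Re (turn x) < 1/10"
proof -
  have "gain (turn x) = 2 * clamp01 (1 - 10 * Re (turn x))"
    using assms(1) unfolding in_sink_zone_def gain_def by (simp add: clamp01_eq_0)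
  then show ?thesis
    using assms(2) clamp01_bounds(1)[of "1 - 10 * Re (turn x)"] clamp01_pos_iff[of "1 - 10 * Re (turn x)"]
    by linarith
qed

lemma gain_left_half:
  assumes "Re (turn t) \<le> 0"
  shows "gain (turn t) = 2" "angle_map t = 4 * t"
proof -
  have "diag 1 (turn t) \<le> 1" "diag (-1) (turn t) \<le> 1"
    using assms abs_Re_Im_turn_le_1(2)[of t] unfolding diag_def by auto
  then show "gain (turn t) = 2" "angle_map t = 4 * t"
    unfolding gain_def angle_map_def using assms by (simp_all add: clamp01_eq_0 clamp01_eq_1)
qed

lemma gain_sink:
  assumes \<sigma>: "\<sigma> \<in> {1, -1}" and sink: "34/25 \<le> diag \<sigma> (turn t)"
  shows "gain (turn t) = 2" "angle_map t = \<sigma> / 8"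
proof -
  have "diag 1 (turn t) + diag (-1) (turn t) = 2 * Re (turn t)"
    unfolding diag_def by simp
  moreover have "Re (turn t) \<le> 1" "1/10 < Re (turn t)"
    using abs_Re_Im_turn_le_1[of t] sink \<sigma> unfolding diag_def by auto
  ultimately have other: "diag (- \<sigma>) (turn t) \<le> 27/20" and "1 - 10 * Re (turn t) \<le> 0"
    using sink \<sigma> by auto
  moreover have "1 \<le> 100 * (diag \<sigma> (turn t) - 27/20)"
    using sink by simp
  ultimately have "gain (turn t) = 2 \<and> angle_map t = \<sigma> / 8"
    using \<sigma> sink unfolding gain_def angle_map_def
    by (elim insertE) (simp_all add: clamp01_eq_0 clamp01_eq_1)
  then show "gain (turn t) = 2" "angle_map t = \<sigma> / 8"
    by simp_all
qed

lemma diag_turn_sink_arc: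
  assumes \<sigma>: "\<sigma> \<in> {1, -1}" and "1/12 \<le> s" "s \<le> 1/6"
  shows "34/25 \<le> diag \<sigma> (turn (\<sigma> * s))"
proof -
  define a where "a = 2 * pi * s"
  have a: "pi/6 \<le> a" "a \<le> pi/3"
    unfolding a_def using assms by (auto simp: field_simps)
  have "sin (pi/3) \<le> sin (2 * a)"
  proof (cases "2 * a \<le> pi/2")
    case True
    then show ?thesis using a by (intro sin_monotone_2pi_le) auto
  next
    case False
    then have "sin (pi/3) \<le> sin (pi - 2 * a)"
      using a by (intro sin_monotone_2pi_le) auto
    then show ?thesis by simp
  qed
  moreover have "17/10 \<le> sqrt (3::real)"
    by (rule real_le_rsqrt) (simp add: power2_eq_square)
  ultimately have "(34/25)^2 \<le> 1 + sin (2 * a)"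
    by (simp add: sin_60 power2_eq_square)
  also have "\<dots> = (sin a)^2 + (cos a)^2 + 2 * sin a * cos a"
    by (simp only: sin_cos_squared_add sin_double)
  also have "\<dots> = (cos a + sin a)^2"
    by (simp add: power2_eq_square algebra_simps)
  finally have "34/25 \<le> cos a + sin a"
    by (rule power2_le_imp_le)
      (use a pi_gt_zero in \<open>intro add_nonneg_nonneg cos_ge_zero sin_ge_zero; linarith\<close>)
  moreover have "diag \<sigma> (turn (\<sigma> * s)) = cos a + sin a"
    using \<sigma> unfolding diag_def Re_turn Im_turn a_def by (elim insertE) auto
  ultimately show ?thesis
    by simp
qed

section \<open>Dynamics on the unit circle\<close>

lemma diag_lt_of_small_Im:
  assumes "cmod w = 1" "\<bar>Im w\<bar> \<le> 2/5" "\<sigma> \<in> {1, -1}"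
  shows "diag \<sigma> w < 27/20"
proof -
  have unit: "(Re w)^2 + (Im w)^2 = 1"
    using assms(1) cmod_power2[of w] by simp
  have "\<bar>Re w\<bar> \<le> 1"
    using abs_Re_le_cmod[of w] assms(1) by simp
  then have "\<bar>\<sigma> * Re w * Im w\<bar> \<le> \<bar>Im w\<bar>"
    using assms(3) by (auto simp: abs_mult mult_left_le_one_le)
  moreover have "(diag \<sigma> w)^2 = 1 + 2 * (\<sigma> * Re w * Im w)"
    using unit assms(3) unfolding diag_def by (auto simp: power2_eq_square algebra_simps)
  ultimately have "(diag \<sigma> w)^2 < (27/20)^2"
    using assms(2) by (simp add: power2_eq_square abs_le_iff)
  then show ?thesis
    by (rule power2_less_imp_less) simp
qed

text \<open>The clamped ramp \<open>2 clamp01 (1 - 10 Re w)\<close> is the only part of the gain on the arc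
  \<open>0 < Re w < 1/10\<close>, and quadrupling the angle moves that arc into the region where the gain vanishes.\<close>
lemma gain_after_ramp:
  assumes "0 < Re (turn t)" "Re (turn t) < 1/10"
  shows "gain (turn (4 * t)) = 0"
proof -
  define c s where "c = Re (turn t)" and "s = Im (turn t)"
  have unit: "c^2 + s^2 = 1"
    unfolding c_def s_def Re_turn Im_turn by simp
  have "turn (4 * t) = Complex c s ^ 4"
    unfolding c_def s_def by (simp add: turn_power4)
  then have Re: "Re (turn (4 * t)) = (c^2 + s^2)^2 - 8 * c^2 * s^2"
    and Im: "Im (turn (4 * t)) = 4 * c * (s * (c^2 - s^2))"
    by (simp_all add: power4_eq_xxxx power2_eq_square power3_eq_cube algebra_simps)
  have "c^2 < 1/100"
    using assms power_strict_mono[of c "1/10" 2] unfolding c_def by (simp add: power2_eq_square)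
  moreover have s2: "s^2 \<le> 1"
    using unit zero_le_power2[of c] by linarith
  then have "c^2 * s^2 \<le> c^2"
    by (simp add: mult_left_le)
  ultimately have "1/10 \<le> Re (turn (4 * t))"
    unfolding Re unit by simp
  have "\<bar>s\<bar> \<le> 1"
    using s2 abs_square_le_1 by blast
  moreover have "\<bar>c^2 - s^2\<bar> \<le> 1"
    using unit zero_le_power2[of c] zero_le_power2[of s] unfolding abs_le_iff by linarith
  ultimately have "\<bar>s * (c^2 - s^2)\<bar> \<le> 1"
    by (simp add: abs_mult mult_le_one)
  then have "\<bar>Im (turn (4 * t))\<bar> \<le> 4 * c"
    unfolding Im using assms unfolding c_def by (simp add: abs_mult mult_left_le)
  then have "\<bar>Im (turn (4 * t))\<bar> \<le> 2/5"
    using assms unfolding c_def by linarith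
  then have "diag 1 (turn (4 * t)) < 27/20" "diag (-1) (turn (4 * t)) < 27/20"
    by (intro diag_lt_of_small_Im norm_turn; simp)+
  with \<open>1/10 \<le> Re (turn (4 * t))\<close> show ?thesis
    unfolding gain_def by (simp add: clamp01_eq_0)
qed

lemma funpow_Suc_apply: "(f ^^ Suc n) x = (f ^^ n) (f x)"
  by (simp only: funpow_Suc_right comp_def)

lemma sink_orbit:
  assumes \<sigma>: "\<sigma> \<in> {1, -1}" and "34/25 \<le> diag \<sigma> (turn t)"
  shows "orbit_gain (Suc n) t = 2 ^ Suc n \<and> (angle_map ^^ Suc n) t = \<sigma> / 8"
  using assms(2)
proof (induction n arbitrary: t)
  case 0
  then show ?case
    using gain_sink[OF \<sigma>] by simp
next
  case (Suc n)
  have "34/25 \<le> diag \<sigma> (turn (\<sigma> / 8))"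
    using diag_turn_sink_arc[OF \<sigma>, of "1/8"] by simp
  then show ?case
    using Suc.IH[of "\<sigma> / 8"] gain_sink[OF \<sigma> Suc.prems] by (simp only: orbit_gain.simps funpow_Suc_apply) simp
qed

lemma sink_point_orbit:
  assumes "\<sigma> \<in> {1, -1}"
  shows "orbit_gain n (\<sigma> / 8) = 2 ^ n \<and> (angle_map ^^ n) (\<sigma> / 8) = \<sigma> / 8"
proof (cases n)
  case (Suc m)
  moreover have "34/25 \<le> diag \<sigma> (turn (\<sigma> / 8))"
    using diag_turn_sink_arc[OF assms, of "1/8"] by simp
  ultimately show ?thesis
    using sink_orbit[OF assms] by blast
qed simp

lemma horseshoe_orbit:
  assumes "\<forall>k\<le>n. cos (2 * pi * (4^k * t)) \<le> 0"
  shows "orbit_gain n t = 2^n \<and> (angle_map ^^ n) t = 4^n * t"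
  using assms
proof (induction n arbitrary: t)
  case (Suc n)
  have "Re (turn t) \<le> 0"
    using Suc.prems[rule_format, of 0] by (simp add: Re_turn)
  moreover have "\<forall>k\<le>n. cos (2 * pi * (4^k * (4 * t))) \<le> 0"
    using Suc.prems by (auto simp: mult.assoc[symmetric] simp flip: power_Suc2)
  ultimately show ?case
    using Suc.IH[of "4 * t"] gain_left_half[of t] by (simp add: funpow_Suc_apply del: funpow.simps)
qed simp

lemma orbit_gain_turn_cong:
  assumes "turn t = turn t'"
  shows "orbit_gain n t = orbit_gain n t' \<and> turn ((angle_map ^^ n) t) = turn ((angle_map ^^ n) t')"
  using assms
proof (induction n arbitrary: t t')
  case (Suc n)
  have "turn (4 * t) = turn (4 * t')"
    using Suc.prems by (metis turn_power4)
  then have "turn (angle_map t) = turn (angle_map t')"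
    unfolding angle_map_def Suc.prems by simp
  from Suc.IH[OF this] show ?case
    using Suc.prems by (simp add: funpow_Suc_apply del: funpow.simps)
qed simp

lemma orbit_gain_nonzero:
  assumes "orbit_gain n t \<noteq> 0" "k < n"
  shows "gain (turn ((angle_map ^^ k) t)) \<noteq> 0"
  using assms
proof (induction n arbitrary: t k)
  case (Suc n)
  then show ?case
    by (cases k) (auto simp: funpow_Suc_apply simp del: funpow.simps)
qed simp

lemma orbit_outside_sink_zone:
  assumes "\<forall>k<n. \<not> in_sink_zone ((angle_map ^^ k) t)" "k \<le> n"
  shows "(angle_map ^^ k) t = 4^k * t"
  using assms(2)
proof (induction k)
  case (Suc k)
  have "\<not> in_sink_zone ((angle_map ^^ k) t)"
    using assms(1) Suc.prems by simp
  moreover have "(angle_map ^^ k) t = 4^k * t"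
    using Suc by simp
  ultimately show ?case
    using angle_map_outside_sink_zone by simp
qed simp

text \<open>A periodic angle whose orbit avoids the sinks stays in the left half circle: on the right half
  circle the gain either vanishes or, by \<open>gain_after_ramp\<close>, vanishes one step later.\<close>
lemma periodic_orbit_outside_sink_zone:
  assumes n: "1 \<le> n" and gain: "orbit_gain n t \<noteq> 0" and per: "turn ((angle_map ^^ n) t) = turn t"
    and out: "\<forall>k<n. \<not> in_sink_zone ((angle_map ^^ k) t)"
  shows "\<forall>k\<le>n. cos (2 * pi * (4^k * t)) \<le> 0"
proof -
  have pw: "(angle_map ^^ k) t = 4^k * t" if "k \<le> n" for k
    using orbit_outside_sink_zone[OF out that] .
  have left: "cos (2 * pi * (4^k * t)) \<le> 0" if k: "k < n" for k
  proof (rule ccontr)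
    assume "\<not> cos (2 * pi * (4^k * t)) \<le> 0"
    then have "0 < Re (turn ((angle_map ^^ k) t))"
      using pw[of k] k by (simp add: Re_turn)
    moreover have "Re (turn ((angle_map ^^ k) t)) < 1/10"
      using gain_outside_sink_zone[of "(angle_map ^^ k) t"] out orbit_gain_nonzero[OF gain k] k
      by simp
    ultimately have "gain (turn (4 * (angle_map ^^ k) t)) = 0"
      by (rule gain_after_ramp)
    moreover have "4 * (angle_map ^^ k) t = (angle_map ^^ Suc k) t"
      using pw[of k] pw[of "Suc k"] k by simp
    ultimately have zero: "gain (turn ((angle_map ^^ Suc k) t)) = 0"
      by simp
    show False
    proof (cases "Suc k < n")
      case True
      then show False
        using zero orbit_gain_nonzero[OF gain True] by simp
    next
      case False
      then have "Suc k = n"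
        using k by simp
      then have "turn ((angle_map ^^ Suc k) t) = turn ((angle_map ^^ 0) t)"
        using per by simp
      then show False
        using zero orbit_gain_nonzero[OF gain, of 0] n by simp
    qed
  qed
  have "cos (2 * pi * (4^n * t)) = Re (turn ((angle_map ^^ n) t))"
    using pw[of n] by (simp add: Re_turn)
  also have "\<dots> = cos (2 * pi * (4^0 * t))"
    using per by (simp add: Re_turn)
  also have "\<dots> \<le> 0"
    using left[of 0] n by simp
  finally show ?thesis
    using left by (metis le_neq_implies_less)
qed

lemma periodic_angle_cases:
  assumes n: "1 \<le> n" and gain: "orbit_gain n t \<noteq> 0" and per: "turn ((angle_map ^^ n) t) = turn t"
  shows "(\<exists>\<sigma>\<in>{1, -1}. turn t = turn (\<sigma> / 8)) \<or> (\<forall>k\<le>n. cos (2 * pi * (4^k * t)) \<le> 0)"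
proof (cases "\<exists>k<n. in_sink_zone ((angle_map ^^ k) t)")
  case True
  then obtain k where k: "k < n" "in_sink_zone ((angle_map ^^ k) t)"
    by blast
  obtain \<sigma> where \<sigma>: "\<sigma> \<in> {1, -1}" "(angle_map ^^ Suc k) t = \<sigma> / 8"
    using angle_map_sink_zone[OF k(2)] that[of 1] that[of "-1"] by auto
  have "n = (n - Suc k) + Suc k"
    using k by simp
  then have "(angle_map ^^ n) t = (angle_map ^^ (n - Suc k)) ((angle_map ^^ Suc k) t)"
    by (metis comp_apply funpow_add)
  also have "\<dots> = (angle_map ^^ (n - Suc k)) (\<sigma> / 8)"
    by (simp only: \<sigma>(2))
  also have "\<dots> = \<sigma> / 8"
    using sink_point_orbit[OF \<sigma>(1)] by blast
  finally have "turn t = turn (\<sigma> / 8)"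
    by (metis per)
  then show ?thesis
    using \<sigma>(1) by blast
next
  case False
  then show ?thesis
    by (intro disjI2 periodic_orbit_outside_sink_zone[OF assms]) blast
qed

lemma orbit_gain_periodic:
  assumes "1 \<le> n" "orbit_gain n t \<noteq> 0" "turn ((angle_map ^^ n) t) = turn t"
  shows "orbit_gain n t = 2^n"
  using periodic_angle_cases[OF assms]
proof
  assume "\<exists>\<sigma>\<in>{1, -1}. turn t = turn (\<sigma> / 8)"
  then obtain \<sigma> where "\<sigma> \<in> {1, -1}" "turn t = turn (\<sigma> / 8)"
    by blast
  then have "orbit_gain n t = orbit_gain n (\<sigma> / 8)"
    using orbit_gain_turn_cong by blast
  also have "\<dots> = 2^n"
    using sink_point_orbit[OF \<open>\<sigma> \<in> {1, -1}\<close>] by blast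
  finally show ?thesis .
next
  assume "\<forall>k\<le>n. cos (2 * pi * (4^k * t)) \<le> 0"
  from horseshoe_orbit[OF this] show ?thesis ..
qed

section \<open>Continuity, periodic points and isolation\<close>

lemma horseshoe_map_0 [simp]: "horseshoe_map 0 = 0"
  unfolding horseshoe_map_def by simp

lemma horseshoe_map_scaled_turn:
  assumes "0 \<le> \<rho>"
  shows "horseshoe_map (complex_of_real \<rho> * turn t) = complex_of_real (\<rho> * gain (turn t)) * turn (angle_map t)"
proof (cases "\<rho> = 0")
  case False
  then have "sgn (complex_of_real \<rho> * turn t) = turn t"
    using assms by (simp add: sgn_scaled_turn)
  moreover have "direction_map (turn t) = turn (angle_map t)"
    unfolding direction_map_def angle_map_def by (simp add: turn_power4)
  ultimately show ?thesis
    unfolding horseshoe_map_def using assms by (simp add: norm_mult)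
qed simp

lemma horseshoe_map_iterate:
  assumes "0 \<le> \<rho>"
  shows "(horseshoe_map ^^ n) (complex_of_real \<rho> * turn t)
    = complex_of_real (\<rho> * orbit_gain n t) * turn ((angle_map ^^ n) t)"
  using assms
proof (induction n arbitrary: \<rho> t)
  case (Suc n)
  have nonneg: "0 \<le> \<rho> * gain (turn t)"
    using Suc.prems gain_nonneg by simp
  have "(horseshoe_map ^^ Suc n) (complex_of_real \<rho> * turn t)
      = (horseshoe_map ^^ n) (complex_of_real (\<rho> * gain (turn t)) * turn (angle_map t))"
    by (simp only: funpow_Suc_apply horseshoe_map_scaled_turn[OF Suc.prems])
  also have "\<dots> = complex_of_real (\<rho> * gain (turn t) * orbit_gain n (angle_map t))
      * turn ((angle_map ^^ n) (angle_map t))"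
    by (rule Suc.IH[OF nonneg])
  finally show ?case
    by (simp only: orbit_gain.simps funpow_Suc_apply mult.assoc)
qed simp

lemma norm_direction_map_le:
  assumes "cmod w \<le> r" "1 \<le> r"
  shows "cmod (direction_map w) \<le> r ^ 4"
proof -
  have "cmod (w ^ 4) \<le> r ^ 4"
    unfolding norm_power using assms by (intro power_mono) auto
  moreover have "1 \<le> r ^ 4"
    using assms(2) by simp
  ultimately show ?thesis
    unfolding direction_map_def by auto
qed

lemma isCont_mult_vanishing:
  fixes g :: "'a::t2_space \<Rightarrow> real" and f :: "'a \<Rightarrow> complex"
  assumes "isCont g x" "g x = 0" "eventually (\<lambda>y. cmod (f y) \<le> B) (nhds x)"
  shows "isCont (\<lambda>y. complex_of_real (g y) * f y) x"
proof -
  have "((\<lambda>y. complex_of_real (g y) * f y) \<longlongrightarrow> 0) (at x)"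
  proof (rule Lim_null_comparison)
    show "eventually (\<lambda>y. norm (complex_of_real (g y) * f y) \<le> \<bar>g y\<bar> * B) (at x)"
    proof -
      have "eventually (\<lambda>y. cmod (f y) \<le> B) (at x)"
        using assms(3) unfolding eventually_at_filter by (rule eventually_mono) simp
      then show ?thesis
        by eventually_elim (simp add: norm_mult mult_left_mono)
    qed
    have "(g \<longlongrightarrow> 0) (at x)"
      using assms(1,2) unfolding isCont_def by simp
    then show "((\<lambda>y. \<bar>g y\<bar> * B) \<longlongrightarrow> 0) (at x)"
      by (auto intro!: tendsto_eq_intros)
  qed
  then show ?thesis
    unfolding isCont_def using assms(2) by simp
qed

lemma continuous_on_diag: "continuous_on UNIV (diag \<sigma>)"
  unfolding diag_def by (intro continuous_intros)

lemma eventually_nhds_diag_gt: "c < diag \<sigma> w0 \<Longrightarrow> eventually (\<lambda>w. c < diag \<sigma> w) (nhds w0)"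
  using eventually_nhds_in_open[of "{w. c < diag \<sigma> w}" w0]
    open_Collect_less[OF continuous_on_const continuous_on_diag] by simp

lemma eventually_nhds_diag_lt: "diag \<sigma> w0 < c \<Longrightarrow> eventually (\<lambda>w. diag \<sigma> w < c) (nhds w0)"
  using eventually_nhds_in_open[of "{w. diag \<sigma> w < c}" w0]
    open_Collect_less[OF continuous_on_diag continuous_on_const] by simp

lemma isCont_gain: "isCont gain w"
proof -
  have "continuous_on UNIV gain"
    unfolding gain_def clamp01_def using continuous_on_diag by (intro continuous_intros) auto
  then show ?thesis
    by (simp add: continuous_on_eq_continuous_at)
qed

lemma isCont_gain_mult_eventually:
  assumes "eventually (\<lambda>w. direction_map w = D w) (nhds w0)" "isCont D w0"
  shows "isCont (\<lambda>w. complex_of_real (gain w) * direction_map w) w0"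
proof -
  have "eventually (\<lambda>w. complex_of_real (gain w) * direction_map w
      = complex_of_real (gain w) * D w) (nhds w0)"
    using assms(1) by eventually_elim simp
  from isCont_cong[OF this] show ?thesis
    using continuous_mult[OF isCont_of_real[OF isCont_gain] assms(2)] by simp
qed

text \<open>On the unit circle the gain vanishes wherever \<open>direction_map\<close> jumps.\<close>
lemma isCont_gain_direction_map:
  assumes "cmod w0 = 1"
  shows "isCont (\<lambda>w. complex_of_real (gain w) * direction_map w) w0"
proof -
  have "diag 1 w0 + diag (-1) w0 \<le> 2"
    using assms abs_Re_le_cmod[of w0] unfolding diag_def by simp
  then consider "27/20 < diag 1 w0"
    | "diag 1 w0 < 27/20" "27/20 < diag (-1) w0"
    | "diag 1 w0 < 27/20" "diag (-1) w0 < 27/20"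
    | \<sigma> where "\<sigma> \<in> {1, -1}" "diag \<sigma> w0 = 27/20"
    by (metis insertCI linorder_neqE_linordered_idom)
  then show ?thesis
  proof cases
    case 1
    then show ?thesis
      using eventually_nhds_diag_gt[OF 1]
      by (intro isCont_gain_mult_eventually[of "\<lambda>_. turn (1/8)"]) (auto elim: eventually_mono simp: direction_map_def)
  next
    case 2
    have "eventually (\<lambda>w. direction_map w = turn (-1/8)) (nhds w0)"
      using eventually_nhds_diag_lt[OF 2(1)] eventually_nhds_diag_gt[OF 2(2)]
      by eventually_elim (simp add: direction_map_def)
    then show ?thesis
      by (rule isCont_gain_mult_eventually) simp
  next
    case 3
    have "eventually (\<lambda>w. direction_map w = w ^ 4) (nhds w0)"
      using eventually_nhds_diag_lt[OF 3(1)] eventually_nhds_diag_lt[OF 3(2)]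
      by eventually_elim (simp add: direction_map_def)
    then show ?thesis
      by (rule isCont_gain_mult_eventually) simp
  next
    case (4 \<sigma>)
    have "1 - 10 * Re w0 \<le> 0" "diag (- \<sigma>) w0 \<le> 27/20"
      using 4 assms abs_Re_le_cmod[of w0] abs_Im_le_cmod[of w0] unfolding diag_def by auto
    then have "gain w0 = 0"
      using 4 unfolding gain_def by (auto simp: clamp01_eq_0)
    moreover have "eventually (\<lambda>w. cmod w < 2) (nhds w0)"
      using eventually_nhds_in_open[of "ball 0 2" w0] assms by simp
    then have "eventually (\<lambda>w. cmod (direction_map w) \<le> 2 ^ 4) (nhds w0)"
      by eventually_elim (rule norm_direction_map_le; simp)
    ultimately show ?thesis
      by (intro isCont_mult_vanishing isCont_gain)
  qed
qed

lemma continuous_horseshoe_map: "continuous_on UNIV horseshoe_map"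
proof -
  have "isCont horseshoe_map z" for z
  proof (cases "z = 0")
    case False
    have "isCont (\<lambda>z. sgn z) z"
      using False by (intro isCont_sgn continuous_ident)
    moreover have "isCont (\<lambda>w. complex_of_real (gain w) * direction_map w) (sgn z)"
      using False by (intro isCont_gain_direction_map) (simp add: norm_sgn)
    ultimately have "isCont (\<lambda>z. complex_of_real (gain (sgn z)) * direction_map (sgn z)) z"
      by (rule isCont_o2)
    then have "isCont (\<lambda>z. complex_of_real (cmod z) * (complex_of_real (gain (sgn z)) * direction_map (sgn z))) z"
      by (rule continuous_mult[rotated]) (intro continuous_intros)
    then show ?thesis
      unfolding horseshoe_map_def by (simp add: mult.assoc)
  next
    case True
    have "(horseshoe_map \<longlongrightarrow> 0) (at 0)"
    proof (rule Lim_null_comparison)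
      have "norm (horseshoe_map w) \<le> 6 * norm w" for w
      proof -
        have "norm (horseshoe_map w) = cmod w * gain (sgn w) * cmod (direction_map (sgn w))"
          unfolding horseshoe_map_def using gain_nonneg[of "sgn w"] by (simp add: norm_mult)
        also have "\<dots> \<le> cmod w * 6 * 1 ^ 4"
        proof (intro mult_mono mult_left_mono)
          show "cmod (direction_map (sgn w)) \<le> 1 ^ 4"
            by (rule norm_direction_map_le) (simp_all add: norm_sgn)
        qed (simp_all add: gain_le_6 gain_nonneg)
        finally show ?thesis
          by simp
      qed
      then show "eventually (\<lambda>w. norm (horseshoe_map w) \<le> 6 * norm w) (at 0)"
        by simp
      show "((\<lambda>w. 6 * norm w) \<longlongrightarrow> 0) (at (0::complex))"
        by (intro tendsto_mult_right_zero tendsto_norm_zero tendsto_ident_at)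
    qed
    then show ?thesis
      using True unfolding isCont_def by simp
  qed
  then show ?thesis
    by (simp add: continuous_at_imp_continuous_on)
qed

text \<open>Nonzero periodic orbits would need total gain \<open>1\<close>, while \<open>orbit_gain_periodic\<close> forces \<open>2^n\<close>.\<close>
lemma periodic_point_horseshoe_map:
  assumes "periodic_point horseshoe_map x"
  shows "x = 0"
proof (rule ccontr)
  assume "x \<noteq> 0"
  obtain n where n: "1 \<le> n" "(horseshoe_map ^^ n) x = x"
    using assms unfolding periodic_point_def by blast
  define t where "t = Arg x / (2 * pi)"
  have x: "x = complex_of_real (cmod x) * turn t"
    unfolding t_def by (rule polar_turn)
  have "complex_of_real (cmod x * orbit_gain n t) * turn ((angle_map ^^ n) t) = complex_of_real (cmod x) * turn t"
    using n(2) horseshoe_map_iterate[of "cmod x" n t] x by simp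
  then have "cmod x * orbit_gain n t = cmod x" and per: "turn ((angle_map ^^ n) t) = turn t"
    using \<open>x \<noteq> 0\<close> gain_nonneg by (subst (asm) scaled_turn_eq_iff; simp add: orbit_gain_nonneg)+
  then have "orbit_gain n t = 1"
    using \<open>x \<noteq> 0\<close> by simp
  moreover from this have "orbit_gain n t = 2^n"
    by (intro orbit_gain_periodic[OF n(1) _ per]) simp
  moreover have "(1::real) < 2^n"
    using n(1) by (intro one_less_power) auto
  ultimately show False
    by simp
qed

lemma not_isolated_invariant_setI:
  fixes f :: "'a::metric_space \<Rightarrow> 'a"
  assumes "\<And>\<epsilon>. 0 < \<epsilon> \<Longrightarrow> \<exists>xs::int \<Rightarrow> 'a. xs 0 \<noteq> p \<and> (\<forall>k. dist (xs k) p < \<epsilon> \<and> f (xs k) = xs (k + 1))"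
  shows "\<not> isolated_invariant_set f {p}"
proof
  assume "isolated_invariant_set f {p}"
  then obtain N where N: "{p} = Inv f N" "p \<in> interior N"
    unfolding isolated_invariant_set_def by blast
  then obtain \<epsilon> where "0 < \<epsilon>" "ball p \<epsilon> \<subseteq> N"
    using mem_interior by blast
  moreover obtain xs :: "int \<Rightarrow> 'a"
    where xs: "xs 0 \<noteq> p" "\<forall>k. dist (xs k) p < \<epsilon> \<and> f (xs k) = xs (k + 1)"
    using assms[OF \<open>0 < \<epsilon>\<close>] by blast
  ultimately have "xs k \<in> N" for k
    by (metis dist_commute mem_ball subsetD)
  then have "xs 0 \<in> Inv f N"
    unfolding Inv_def using xs(2) by auto
  with N(1) \<open>xs 0 \<noteq> p\<close> show False
    by blast
qed

text \<open>The angles of a backward orbit converging to \<open>0\<close> inside the left half circle, where the map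
  doubles the radius and quadruples the angle.\<close>
definition backward_angle :: "nat \<Rightarrow> real" where
  "backward_angle m = 1/3 - 1 / (12 * 4^m)"

lemma backward_angle_left_half: "Re (turn (backward_angle m)) \<le> 0"
proof -
  have "1 / (12 * 4^m) \<le> (1::real) / 12"
    by (simp add: field_simps)
  moreover have "0 < 1 / (12 * (4::real)^m)"
    by simp
  ultimately have "1/4 \<le> backward_angle m" "backward_angle m \<le> 3/4"
    unfolding backward_angle_def by linarith+
  then show ?thesis
    unfolding Re_turn using cos_2pi_nonpos_iff[of "backward_angle m"] by simp
qed

lemma horseshoe_map_backward_angle:
  assumes "0 \<le> \<rho>"
  shows "horseshoe_map (complex_of_real (\<rho> / 2 ^ Suc m) * turn (backward_angle (Suc m)))
    = complex_of_real (\<rho> / 2 ^ m) * turn (backward_angle m)"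
proof -
  have "4 * backward_angle (Suc m) = backward_angle m + 1"
    unfolding backward_angle_def by (simp add: field_simps)
  then show ?thesis
    using assms horseshoe_map_scaled_turn[of "\<rho> / 2 ^ Suc m"] gain_left_half[OF backward_angle_left_half]
      turn_int_shift[of 1 "backward_angle m"] by simp
qed

text \<open>A full orbit arbitrarily close to \<open>0\<close>: for \<open>k \<le> 0\<close> it leaves \<open>0\<close> along the angles
  \<open>backward_angle\<close>; at \<open>k = 1\<close> it reaches the positive real axis, where the gain vanishes.\<close>
definition escaping_orbit :: "real \<Rightarrow> int \<Rightarrow> complex" where
  "escaping_orbit \<rho> k = (if k \<le> 0 then complex_of_real (\<rho> / 2 ^ nat (- k)) * turn (backward_angle (nat (- k)))
     else if k = 1 then complex_of_real (2 * \<rho>) else 0)"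

lemma norm_escaping_orbit_le:
  assumes "0 < \<rho>"
  shows "cmod (escaping_orbit \<rho> k) \<le> 2 * \<rho>"
proof (cases "k \<le> 0")
  case True
  then have "cmod (escaping_orbit \<rho> k) = \<bar>\<rho> / 2 ^ nat (- k)\<bar>"
    unfolding escaping_orbit_def by (simp only: if_P norm_scaled_turn)
  moreover have "\<rho> / 2 ^ nat (- k) \<le> \<rho>"
    using assms by (simp add: divide_le_eq one_le_power)
  ultimately show ?thesis
    using assms by simp
qed (use assms in \<open>simp add: escaping_orbit_def\<close>)

lemma horseshoe_map_escaping_orbit:
  assumes \<rho>: "0 < \<rho>"
  shows "horseshoe_map (escaping_orbit \<rho> k) = escaping_orbit \<rho> (k + 1)"
proof -
  consider "k \<le> -1" | "k = 0" | "k = 1" | "2 \<le> k"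
    by linarith
  then show ?thesis
  proof cases
    case 1
    then have "nat (- k) = Suc (nat (- (k + 1)))"
      by simp
    then show ?thesis
      unfolding escaping_orbit_def using 1 horseshoe_map_backward_angle[of \<rho> "nat (- (k + 1))"] \<rho> by simp
  next
    case 2
    have "turn (4 * backward_angle 0) = 1"
      unfolding backward_angle_def turn_def by simp
    then show ?thesis
      unfolding escaping_orbit_def 2 using \<rho> horseshoe_map_scaled_turn[of \<rho> "backward_angle 0"]
        gain_left_half[OF backward_angle_left_half] by simp
  next
    case 3
    have "gain (turn 0) = 0"
      unfolding gain_def diag_def turn_def by (simp add: clamp01_eq_0)
    then show ?thesis
      unfolding escaping_orbit_def 3 using \<rho> horseshoe_map_scaled_turn[of "2 * \<rho>" 0] by (simp add: turn_def)
  next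
    case 4
    then show ?thesis
      unfolding escaping_orbit_def by simp
  qed
qed

lemma not_isolated_horseshoe_map: "\<not> isolated_invariant_set horseshoe_map {0}"
proof (rule not_isolated_invariant_setI)
  fix \<epsilon> :: real
  assume "0 < \<epsilon>"
  then have "0 < \<epsilon> / 4" "escaping_orbit (\<epsilon> / 4) 0 \<noteq> 0"
    unfolding escaping_orbit_def by simp_all
  moreover have "dist (escaping_orbit (\<epsilon> / 4) k) 0 < \<epsilon>" for k
    using norm_escaping_orbit_le[OF \<open>0 < \<epsilon> / 4\<close>, of k] \<open>0 < \<epsilon>\<close> by simp
  ultimately show "\<exists>xs::int \<Rightarrow> complex. xs 0 \<noteq> 0 \<and> (\<forall>k. dist (xs k) 0 < \<epsilon> \<and> horseshoe_map (xs k) = xs (k + 1))"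
    using horseshoe_map_escaping_orbit by (intro exI[of _ "escaping_orbit (\<epsilon> / 4)"]) auto
qed

section \<open>The horseshoe intervals\<close>

text \<open>\<open>horseshoe_codes n\<close> is the set of base-4 numerals with \<open>n\<close> digits in \<open>{1, 2}\<close>; the intervals
  \<open>[cylinder_lo n w, cylinder_hi n w]\<close> for these \<open>w\<close> are the points of \<open>[0, 1)\<close> whose angles
  \<open>4^k t\<close>, \<open>k \<le> n\<close>, all lie in the left half circle.\<close>
primrec horseshoe_codes :: "nat \<Rightarrow> nat set" where
  "horseshoe_codes 0 = {0}"
| "horseshoe_codes (Suc n) = (\<lambda>(d, w). d * 4^n + w) ` ({1, 2} \<times> horseshoe_codes n)"

definition cylinder_lo :: "nat \<Rightarrow> nat \<Rightarrow> real" where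
  "cylinder_lo n w = (real w + 1/4) / 4^n"

definition cylinder_hi :: "nat \<Rightarrow> nat \<Rightarrow> real" where
  "cylinder_hi n w = (real w + 3/4) / 4^n"

lemma horseshoe_code_less: "w \<in> horseshoe_codes n \<Longrightarrow> w < 4^n"
proof (induction n arbitrary: w)
  case (Suc n)
  then obtain d w' where "d \<in> {1, 2}" "w' \<in> horseshoe_codes n" "w = d * 4^n + w'"
    by auto
  moreover from this have "w' < 4^n"
    using Suc.IH by simp
  ultimately show ?case
    by auto
qed simp

lemma card_horseshoe_codes: "finite (horseshoe_codes n) \<and> card (horseshoe_codes n) = 2^n"
proof (induction n)
  case (Suc n)
  have "inj_on (\<lambda>(d, w). d * 4^n + w) ({1::nat, 2} \<times> horseshoe_codes n)"
  proof (rule inj_onI, clarify)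
    fix d w d' w'
    assume "w \<in> horseshoe_codes n" "w' \<in> horseshoe_codes n" and eq: "d * 4^n + w = d' * 4^n + (w'::nat)"
    then have "w < 4^n" "w' < 4^n"
      using horseshoe_code_less by simp_all
    then have "(d * 4^n + w) div 4^n = d" "(d' * 4^n + w') div 4^n = d'"
      by simp_all
    with eq show "d = d' \<and> w = w'"
      by simp
  qed
  then have "card (horseshoe_codes (Suc n)) = card ({1::nat, 2} \<times> horseshoe_codes n)"
    unfolding horseshoe_codes.simps by (rule card_image)
  then show ?case
    using Suc by (simp add: card_cartesian_product)
qed simp

lemma cylinder_Suc_iff:
  assumes "d \<in> {1::nat, 2}"
  shows "t \<in> {cylinder_lo (Suc n) (d * 4^n + w)..cylinder_hi (Suc n) (d * 4^n + w)}
    \<longleftrightarrow> 4 * t - d \<in> {cylinder_lo n w..cylinder_hi n w}"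
proof -
  have "cylinder_lo (Suc n) (d * 4^n + w) = (cylinder_lo n w + d) / 4"
    "cylinder_hi (Suc n) (d * 4^n + w) = (cylinder_hi n w + d) / 4"
    unfolding cylinder_lo_def cylinder_hi_def by (simp_all add: field_simps)
  then show ?thesis
    by auto
qed

lemma cos_2pi_shift_nat: "cos (2 * pi * (4^k * (4 * t - real d))) = cos (2 * pi * (4^Suc k * t))"
proof -
  have "4^k * (4 * t - d) = 4^Suc k * t + real_of_int (- (4^k * int d))"
    by (simp add: algebra_simps)
  then show ?thesis
    using cos_2pi_int_shift[of "real_of_int (- (4^k * int d))" "4^Suc k * t"] by simp
qed

lemma cylinder_left_half:
  assumes "w \<in> horseshoe_codes n" "t \<in> {cylinder_lo n w..cylinder_hi n w}"
  shows "1/4 \<le> t \<and> t \<le> 3/4" "1 \<le> n \<Longrightarrow> 5/16 \<le> t \<and> t \<le> 11/16"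
    "\<forall>k\<le>n. cos (2 * pi * (4^k * t)) \<le> 0"
proof -
  have "(1/4 \<le> t \<and> t \<le> 3/4) \<and> (1 \<le> n \<longrightarrow> 5/16 \<le> t \<and> t \<le> 11/16) \<and> (\<forall>k\<le>n. cos (2 * pi * (4^k * t)) \<le> 0)"
    using assms
  proof (induction n arbitrary: w t)
    case 0
    then have "1/4 \<le> t \<and> t \<le> 3/4"
      by (auto simp: cylinder_lo_def cylinder_hi_def)
    then show ?case
      using cos_2pi_nonpos_iff[of t] by simp
  next
    case (Suc n)
    then obtain d w' where d: "d \<in> {1::nat, 2}" "w' \<in> horseshoe_codes n" "w = d * 4^n + w'"
      by auto
    then have "4 * t - d \<in> {cylinder_lo n w'..cylinder_hi n w'}"
      using cylinder_Suc_iff[OF d(1)] Suc.prems by simp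
    note IH = Suc.IH[OF d(2) this]
    then have t: "5/16 \<le> t \<and> t \<le> 11/16"
      using d(1) by auto
    have "cos (2 * pi * (4^k * t)) \<le> 0" if "k \<le> Suc n" for k
    proof (cases k)
      case 0
      then show ?thesis
        using t cos_2pi_nonpos_iff[of t] by simp
    next
      case (Suc k')
      then have "cos (2 * pi * (4^k' * (4 * t - d))) \<le> 0"
        using IH that by simp
      then show ?thesis
        unfolding Suc cos_2pi_shift_nat[of k' t d, symmetric] .
    qed
    with t show ?case
      by simp
  qed
  then show "1/4 \<le> t \<and> t \<le> 3/4" "1 \<le> n \<Longrightarrow> 5/16 \<le> t \<and> t \<le> 11/16"
    "\<forall>k\<le>n. cos (2 * pi * (4^k * t)) \<le> 0"
    by simp_all
qed

lemma cylinder_cover: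
  assumes "0 \<le> t" "t < 1" "\<forall>k\<le>n. cos (2 * pi * (4^k * t)) \<le> 0"
  shows "\<exists>w\<in>horseshoe_codes n. t \<in> {cylinder_lo n w..cylinder_hi n w}"
  using assms
proof (induction n arbitrary: t)
  case 0
  then have "1/4 \<le> t \<and> t \<le> 3/4"
    using cos_2pi_nonpos_iff[of t] by simp
  then show ?case
    by (simp add: cylinder_lo_def cylinder_hi_def)
next
  case (Suc n)
  have t: "1/4 \<le> t" "t \<le> 3/4"
    using cos_2pi_nonpos_iff[of t] Suc.prems by auto
  have "t \<noteq> 3/4"
  proof
    assume "t = 3/4"
    then have "4^1 * t = 0 + 3"
      by simp
    then have "cos (2 * pi * (4^1 * t)) = cos (2 * pi * (0 + 3))"
      by (simp only:)
    then show False
      using Suc.prems(3)[rule_format, of 1] cos_2pi_int_shift[of 3 0] by simp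
  qed
  then obtain d :: nat where d: "d \<in> {1, 2}" "0 \<le> 4 * t - d" "4 * t - d < 1"
    using t that[of 1] that[of 2] by (cases "4 * t < 2") auto
  moreover have "\<forall>k\<le>n. cos (2 * pi * (4^k * (4 * t - d))) \<le> 0"
  proof (intro allI impI)
    fix k assume "k \<le> n"
    then have "Suc k \<le> Suc n"
      by simp
    from Suc.prems(3)[rule_format, OF this] show "cos (2 * pi * (4^k * (4 * t - d))) \<le> 0"
      unfolding cos_2pi_shift_nat .
  qed
  ultimately obtain w' where "w' \<in> horseshoe_codes n" "4 * t - d \<in> {cylinder_lo n w'..cylinder_hi n w'}"
    using Suc.IH by blast
  then show ?case
    using d cylinder_Suc_iff[OF d(1)] by (intro bexI[of _ "d * 4^n + w'"]) auto
qed

lemma cylinders_disjoint: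
  assumes "w \<noteq> w'"
  shows "cylinder_hi n w < cylinder_lo n w' \<or> cylinder_hi n w' < cylinder_lo n w"
proof -
  have "real w + 3/4 < real w' + 1/4 \<or> real w' + 3/4 < real w + 1/4"
    using assms by linarith
  then show ?thesis
    unfolding cylinder_lo_def cylinder_hi_def by (auto simp: divide_strict_right_mono)
qed

section \<open>The fixed point index\<close>

text \<open>\<open>(z - f\<^sup>n z) / z\<close> at the point \<open>z = turn t\<close> of the unit circle.\<close>
definition unit_displacement :: "nat \<Rightarrow> real \<Rightarrow> complex" where
  "unit_displacement n t = 1 - (horseshoe_map ^^ n) (turn t) * turn (- t)"

lemma unit_displacement_eq:
  "unit_displacement n t = 1 - complex_of_real (orbit_gain n t) * turn ((angle_map ^^ n) t - t)"
  using horseshoe_map_iterate[of 1 n t]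
  by (simp add: unit_displacement_def mult.assoc turn_add)

lemma continuous_on_unit_displacement: "continuous_on A (unit_displacement n)"
proof -
  have "continuous_on A turn"
    unfolding turn_def by (intro continuous_intros)
  moreover have "continuous_on UNIV (horseshoe_map ^^ n)"
    by (induction n) (auto intro: continuous_on_compose2[OF continuous_horseshoe_map] simp: continuous_on_id)
  ultimately have "continuous_on A (\<lambda>t. (horseshoe_map ^^ n) (turn t))"
    by (intro continuous_on_compose2[of UNIV "horseshoe_map ^^ n" A turn]) auto
  moreover have "continuous_on A (\<lambda>t. turn (- t))"
    unfolding turn_def by (intro continuous_intros)
  ultimately show ?thesis
    unfolding unit_displacement_def by (intro continuous_intros)
qed

lemma one_minus_scaled_turn_nonpos_Reals:
  assumes "0 \<le> A" "1 - complex_of_real A * turn x \<in> \<real>\<^sub>\<le>\<^sub>0"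
  shows "1 \<le> A" "turn x = 1"
proof -
  define u where "u = complex_of_real A * turn x"
  have "u = complex_of_real (Re u)" "1 \<le> Re u"
    using assms(2) unfolding u_def by (auto simp: complex_nonpos_Reals_iff complex_eq_iff)
  moreover have "cmod u = A"
    unfolding u_def using assms(1) by simp
  ultimately have "A = Re u"
    by (metis abs_of_nonneg norm_of_real order_trans zero_le_one)
  with \<open>1 \<le> Re u\<close> \<open>u = complex_of_real (Re u)\<close> show "1 \<le> A" "turn x = 1"
    unfolding u_def by (auto simp: mult_cancel_left1)
qed

lemma unit_displacement_nonpos_Reals:
  assumes n: "1 \<le> n" and "unit_displacement n t \<in> \<real>\<^sub>\<le>\<^sub>0"
  shows "turn ((angle_map ^^ n) t) = turn t" "orbit_gain n t = 2^n" "unit_displacement n t = 1 - 2^n"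
proof -
  have "1 \<le> orbit_gain n t" and turn1: "turn ((angle_map ^^ n) t - t) = 1"
    using one_minus_scaled_turn_nonpos_Reals[OF orbit_gain_nonneg] assms(2)
    unfolding unit_displacement_eq by blast+
  show per: "turn ((angle_map ^^ n) t) = turn t"
    using turn_add[of "(angle_map ^^ n) t - t" t] turn1 by simp
  show "orbit_gain n t = 2^n"
    using \<open>1 \<le> orbit_gain n t\<close> by (intro orbit_gain_periodic[OF n _ per]) simp
  then show "unit_displacement n t = 1 - 2^n"
    unfolding unit_displacement_eq turn1 by simp
qed

lemma unit_displacement_nonzero:
  assumes "1 \<le> n"
  shows "unit_displacement n t \<noteq> 0"
proof
  assume zero: "unit_displacement n t = 0"
  have "unit_displacement n t = 1 - 2^n"
    by (rule unit_displacement_nonpos_Reals(3)[OF assms]) (simp add: zero)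
  with zero have "cmod ((2::complex)^n) = 1"
    by simp
  then have "(2::real)^n = 1"
    by (simp add: norm_power)
  moreover have "(1::real) < 2^n"
    using assms by (intro one_less_power) auto
  ultimately show False
    by simp
qed

lemma unit_displacement_crossing_points:
  assumes n: "1 \<le> n" and t: "t \<in> {0..1}" and cut: "unit_displacement n t \<in> \<real>\<^sub>\<le>\<^sub>0"
  shows "t \<in> {1/12..1/6} \<or> t \<in> {5/6..11/12}
    \<or> (\<exists>w\<in>horseshoe_codes n. t \<in> {cylinder_lo n w..cylinder_hi n w})"
proof -
  have "orbit_gain n t \<noteq> 0"
    using unit_displacement_nonpos_Reals(2)[OF n cut] by simp
  from periodic_angle_cases[OF n this unit_displacement_nonpos_Reals(1)[OF n cut]]
  show ?thesis
  proof (elim disjE bexE)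
    fix \<sigma> :: real assume \<sigma>: "\<sigma> \<in> {1, -1}" "turn t = turn (\<sigma> / 8)"
    then obtain m :: int where m: "t = \<sigma> / 8 + m"
      using turn_eq_turnD by blast
    from \<sigma>(1) show ?thesis
    proof (elim insertE)
      assume "\<sigma> = 1"
      then have "real_of_int m < 1" "-1 < real_of_int m"
        using m t by auto
      then have "m = 0"
        by simp
      then show ?thesis
        using m \<open>\<sigma> = 1\<close> by simp
    next
      assume "\<sigma> = -1"
      then have "real_of_int m < 2" "0 < real_of_int m"
        using m t by auto
      then have "m = 1"
        by simp
      then show ?thesis
        using m \<open>\<sigma> = -1\<close> by simp
    qed simp
  next
    assume left: "\<forall>k\<le>n. cos (2 * pi * (4^k * t)) \<le> 0"
    have "t \<noteq> 1"
      using left[rule_format, of 0] by auto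
    then show ?thesis
      using cylinder_cover[of t n] t left by auto
  qed
qed

lemma net_crossings_cylinder:
  assumes n: "1 \<le> n" and w: "w \<in> horseshoe_codes n"
  shows "unit_displacement n (cylinder_lo n w) \<notin> \<real>\<^sub>\<le>\<^sub>0 \<and> unit_displacement n (cylinder_hi n w) \<notin> \<real>\<^sub>\<le>\<^sub>0
    \<and> net_crossings (unit_displacement n) (cylinder_lo n w) (cylinder_hi n w) 1"
proof -
  define \<theta> where "\<theta> t = (4^n - 1) * t - real w" for t
  have lt: "cylinder_lo n w < cylinder_hi n w"
    unfolding cylinder_lo_def cylinder_hi_def by (simp add: divide_strict_right_mono)
  then have "cylinder_lo n w \<in> {cylinder_lo n w..cylinder_hi n w}" "cylinder_hi n w \<in> {cylinder_lo n w..cylinder_hi n w}"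
    by auto
  with lt have lo_hi: "5/16 \<le> cylinder_lo n w" "cylinder_hi n w \<le> 11/16"
    using cylinder_left_half(2)[OF w _ n] by blast+
  have "unit_displacement n t = 1 - complex_of_real (2^n) * turn (\<theta> t)"
    if "t \<in> {cylinder_lo n w..cylinder_hi n w}" for t
  proof -
    have "orbit_gain n t = 2^n \<and> (angle_map ^^ n) t = 4^n * t"
      using horseshoe_orbit cylinder_left_half(3)[OF w that] by blast
    moreover have "turn (4^n * t - t) = turn (\<theta> t)"
      unfolding \<theta>_def using turn_int_shift[of "real w" "(4^n - 1) * t - real w"] by (simp add: algebra_simps)
    ultimately show ?thesis
      unfolding unit_displacement_eq by simp
  qed
  moreover have "\<theta> (cylinder_lo n w) = 1/4 - cylinder_lo n w" "\<theta> (cylinder_hi n w) = 3/4 - cylinder_hi n w"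
    unfolding \<theta>_def cylinder_lo_def cylinder_hi_def by (simp_all add: field_simps)
  moreover have "continuous_on {cylinder_lo n w..cylinder_hi n w} \<theta>"
    unfolding \<theta>_def by (intro continuous_intros)
  moreover have "1 < (2::real)^n"
    using n by (intro one_less_power) auto
  ultimately have "unit_displacement n (cylinder_lo n w) \<notin> \<real>\<^sub>\<le>\<^sub>0 \<and> unit_displacement n (cylinder_hi n w) \<notin> \<real>\<^sub>\<le>\<^sub>0
    \<and> net_crossings (unit_displacement n) (cylinder_lo n w) (cylinder_hi n w)
      (of_bool (0 < \<theta> (cylinder_hi n w)) - of_bool (0 < \<theta> (cylinder_lo n w)))"
    using lt lo_hi by (intro net_crossings_one_minus_turn) auto
  then show ?thesis
    using \<open>\<theta> (cylinder_lo n w) = 1/4 - cylinder_lo n w\<close> \<open>\<theta> (cylinder_hi n w) = 3/4 - cylinder_hi n w\<close> lo_hi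
    by simp
qed

lemma sink_arc_orbit:
  assumes n: "1 \<le> n" and c: "c \<in> {1/8, 7/8}" and t: "t \<in> {c - 1/24..c + 1/24}"
  shows "orbit_gain n t = 2^n \<and> turn ((angle_map ^^ n) t) = turn c"
proof -
  obtain m where m: "n = Suc m"
    using n by (cases n) auto
  obtain \<sigma> s where \<sigma>: "\<sigma> \<in> {1, -1}" "turn t = turn (\<sigma> * s)" "1/12 \<le> s" "s \<le> 1/6"
    "turn (\<sigma> / 8) = turn c"
  proof (cases "c = 1/8")
    case True
    then show ?thesis
      using t that[of 1 t] by (simp add: True)
  next
    case False
    then have "c = 7/8"
      using c by simp
    moreover have "turn t = turn (-1 * (1 - t))" "turn (-1 / 8) = turn (7/8)"
      using turn_int_shift[of "-1" t] turn_int_shift[of "-1" "7/8"] by simp_all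
    ultimately show ?thesis
      using t that[of "-1" "1 - t"] by (simp add: \<open>c = 7/8\<close>)
  qed
  have "34/25 \<le> diag \<sigma> (turn t)"
    using diag_turn_sink_arc[OF \<sigma>(1,3,4)] \<sigma>(2) by simp
  then have "orbit_gain n t = 2^n \<and> (angle_map ^^ n) t = \<sigma> / 8"
    using sink_orbit[OF \<sigma>(1)] m by blast
  then show ?thesis
    by (metis \<sigma>(5))
qed

lemma net_crossings_sink_arc:
  assumes n: "1 \<le> n" and c: "c \<in> {1/8, 7/8}"
  shows "unit_displacement n (c - 1/24) \<notin> \<real>\<^sub>\<le>\<^sub>0 \<and> unit_displacement n (c + 1/24) \<notin> \<real>\<^sub>\<le>\<^sub>0
    \<and> net_crossings (unit_displacement n) (c - 1/24) (c + 1/24) (-1)"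
proof -
  have "unit_displacement n t = 1 - complex_of_real (2^n) * turn (c - t)"
    if "t \<in> {c - 1/24..c + 1/24}" for t
  proof -
    have "turn ((angle_map ^^ n) t - t) = turn ((angle_map ^^ n) t) * turn (- t)"
      by (simp add: turn_add)
    also have "\<dots> = turn (c - t)"
      using sink_arc_orbit[OF n c that] by (simp add: turn_add)
    finally show ?thesis
      using sink_arc_orbit[OF n c that] unfolding unit_displacement_eq by simp
  qed
  moreover have "1 < (2::real)^n"
    using n by (intro one_less_power) auto
  ultimately have "unit_displacement n (c - 1/24) \<notin> \<real>\<^sub>\<le>\<^sub>0 \<and> unit_displacement n (c + 1/24) \<notin> \<real>\<^sub>\<le>\<^sub>0
    \<and> net_crossings (unit_displacement n) (c - 1/24) (c + 1/24)
      (of_bool (0 < c - (c + 1/24)) - of_bool (0 < c - (c - 1/24)))"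
    by (intro net_crossings_one_minus_turn) (auto intro: continuous_intros)
  then show ?thesis
    by simp
qed

definition cylinder_arcs :: "nat \<Rightarrow> (real \<times> real) set" where
  "cylinder_arcs n = (\<lambda>w. (cylinder_lo n w, cylinder_hi n w)) ` horseshoe_codes n"

definition sink_arcs :: "(real \<times> real) set" where
  "sink_arcs = (\<lambda>c. (c - 1/24, c + 1/24)) ` {1/8, 7/8}"

definition arc_sign :: "nat \<Rightarrow> real \<times> real \<Rightarrow> int" where
  "arc_sign n p = (if p \<in> cylinder_arcs n then 1 else -1)"

lemma sink_arcs_eq: "sink_arcs = {(1/12, 1/6), (5/6, 11/12)}"
  unfolding sink_arcs_def by simp

lemma cylinder_arcs_bounds:
  assumes "1 \<le> n" "p \<in> cylinder_arcs n"
  shows "5/16 \<le> fst p \<and> fst p < snd p \<and> snd p \<le> 11/16"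
proof -
  obtain w where w: "w \<in> horseshoe_codes n" "p = (cylinder_lo n w, cylinder_hi n w)"
    using assms(2) unfolding cylinder_arcs_def by blast
  moreover have "cylinder_lo n w < cylinder_hi n w"
    unfolding cylinder_lo_def cylinder_hi_def by (simp add: divide_strict_right_mono)
  ultimately show ?thesis
    using cylinder_left_half(2)[OF w(1) _ assms(1), of "cylinder_lo n w"]
      cylinder_left_half(2)[OF w(1) _ assms(1), of "cylinder_hi n w"] by auto
qed

lemma sum_arc_sign:
  assumes "1 \<le> n"
  shows "finite (cylinder_arcs n \<union> sink_arcs)" "(\<Sum>p\<in>cylinder_arcs n \<union> sink_arcs. arc_sign n p) = 2^n - 2"
proof -
  have "inj_on (\<lambda>w. (cylinder_lo n w, cylinder_hi n w)) (horseshoe_codes n)"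
    by (rule inj_onI) (simp add: cylinder_lo_def)
  then have fin: "finite (cylinder_arcs n)" "card (cylinder_arcs n) = 2^n"
    unfolding cylinder_arcs_def using card_horseshoe_codes[of n] by (simp_all add: card_image)
  have disjoint: "cylinder_arcs n \<inter> sink_arcs = {}"
    using cylinder_arcs_bounds[OF assms] unfolding sink_arcs_eq by fastforce
  then show "finite (cylinder_arcs n \<union> sink_arcs)"
    using fin by (simp add: sink_arcs_eq)
  have "(\<Sum>p\<in>cylinder_arcs n. arc_sign n p) = int (card (cylinder_arcs n))"
    unfolding arc_sign_def by simp
  moreover have "(\<Sum>p\<in>sink_arcs. arc_sign n p) = -2"
    using disjoint unfolding sink_arcs_eq arc_sign_def by auto
  ultimately show "(\<Sum>p\<in>cylinder_arcs n \<union> sink_arcs. arc_sign n p) = 2^n - 2"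
    using fin disjoint by (simp add: sum.union_disjoint sink_arcs_eq)
qed

lemma crossing_arcs_disjoint:
  assumes "1 \<le> n" "p \<in> cylinder_arcs n \<union> sink_arcs" "q \<in> cylinder_arcs n \<union> sink_arcs" "p \<noteq> q"
  shows "snd p < fst q \<or> snd q < fst p"
proof (cases "p \<in> cylinder_arcs n \<and> q \<in> cylinder_arcs n")
  case True
  then obtain w w' where "p = (cylinder_lo n w, cylinder_hi n w)" "q = (cylinder_lo n w', cylinder_hi n w')"
    unfolding cylinder_arcs_def by blast
  with assms(4) show ?thesis
    using cylinders_disjoint[of w w' n] by auto
next
  case False
  with assms cylinder_arcs_bounds[of n p] cylinder_arcs_bounds[of n q] show ?thesis
    unfolding sink_arcs_eq by auto
qed

lemma crossing_arcs_net_crossings: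
  assumes n: "1 \<le> n" and p: "p \<in> cylinder_arcs n \<union> sink_arcs"
  shows "unit_displacement n (fst p) \<notin> \<real>\<^sub>\<le>\<^sub>0 \<and> unit_displacement n (snd p) \<notin> \<real>\<^sub>\<le>\<^sub>0
    \<and> net_crossings (unit_displacement n) (fst p) (snd p) (arc_sign n p)"
proof (cases "p \<in> cylinder_arcs n")
  case True
  then show ?thesis
    unfolding cylinder_arcs_def arc_sign_def using net_crossings_cylinder[OF n] by auto
next
  case False
  then obtain c where "c \<in> {1/8, 7/8}" "p = (c - 1/24, c + 1/24)"
    using p unfolding sink_arcs_def by blast
  with False show ?thesis
    using net_crossings_sink_arc[OF n] unfolding arc_sign_def by simp
qed

lemma unit_displacement_off_arcs:
  assumes n: "1 \<le> n" and t: "t \<in> {0..1}"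
    and outside: "\<forall>p\<in>cylinder_arcs n \<union> sink_arcs. t \<notin> {fst p<..<snd p}"
  shows "unit_displacement n t \<notin> \<real>\<^sub>\<le>\<^sub>0"
proof
  assume cut: "unit_displacement n t \<in> \<real>\<^sub>\<le>\<^sub>0"
  have "\<exists>p\<in>cylinder_arcs n \<union> sink_arcs. t \<in> {fst p..snd p}"
    using unit_displacement_crossing_points[OF n t cut]
  proof (elim disjE bexE)
    fix w assume "w \<in> horseshoe_codes n" "t \<in> {cylinder_lo n w..cylinder_hi n w}"
    then show ?thesis
      unfolding cylinder_arcs_def by force
  qed (auto simp: sink_arcs_eq)
  then obtain p where p: "p \<in> cylinder_arcs n \<union> sink_arcs" "t \<in> {fst p..snd p}"
    by blast
  have "t \<notin> {fst p<..<snd p}"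
    using outside p(1) by blast
  with p(2) have "t = fst p \<or> t = snd p"
    by auto
  with crossing_arcs_net_crossings[OF n p(1)] cut show False
    by auto
qed

lemma net_crossings_unit_displacement:
  assumes n: "1 \<le> n"
  shows "net_crossings (unit_displacement n) 0 1 (2^n - 2)"
proof -
  have "net_crossings (unit_displacement n) 0 1 (\<Sum>p\<in>cylinder_arcs n \<union> sink_arcs. arc_sign n p)"
  proof (rule net_crossings_sum)
    show "\<forall>p\<in>cylinder_arcs n \<union> sink_arcs. 0 < fst p \<and> fst p < snd p \<and> snd p < 1"
      using cylinder_arcs_bounds[OF n] unfolding sink_arcs_eq by fastforce
  qed (use sum_arc_sign(1) crossing_arcs_disjoint continuous_on_unit_displacement
      unit_displacement_off_arcs crossing_arcs_net_crossings n in auto)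
  then show ?thesis
    using sum_arc_sign(2)[OF n] by simp
qed

lemma fixed_point_index_eqI:
  assumes "0 < \<epsilon>"
    and "\<And>r. 0 < r \<Longrightarrow> r < \<epsilon> \<Longrightarrow>
      loop_winding (\<lambda>t. (p + complex_of_real r * cis (2 * pi * t)) - f (p + complex_of_real r * cis (2 * pi * t))) = k"
  shows "fixed_point_index f p = k"
  unfolding fixed_point_index_def
proof (rule the_equality)
  show "\<exists>\<epsilon>>0. \<forall>r. 0 < r \<and> r < \<epsilon> \<longrightarrow>
      loop_winding (\<lambda>t. (p + complex_of_real r * cis (2 * pi * t)) - f (p + complex_of_real r * cis (2 * pi * t))) = k"
    using assms by blast
next
  fix k'
  assume "\<exists>\<epsilon>>0. \<forall>r. 0 < r \<and> r < \<epsilon> \<longrightarrow>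
      loop_winding (\<lambda>t. (p + complex_of_real r * cis (2 * pi * t)) - f (p + complex_of_real r * cis (2 * pi * t))) = k'"
  then obtain \<epsilon>' where "0 < \<epsilon>'" and k': "\<forall>r. 0 < r \<and> r < \<epsilon>' \<longrightarrow>
      loop_winding (\<lambda>t. (p + complex_of_real r * cis (2 * pi * t)) - f (p + complex_of_real r * cis (2 * pi * t))) = k'"
    by blast
  define r where "r = min \<epsilon> \<epsilon>' / 2"
  have "0 < r" "r < \<epsilon>" "r < \<epsilon>'"
    unfolding r_def using \<open>0 < \<epsilon>\<close> \<open>0 < \<epsilon>'\<close> by auto
  with assms(2) k' show "k' = k"
    by metis
qed

lemma loop_winding_horseshoe_map:
  assumes n: "1 \<le> n" and r: "0 < r"
  shows "loop_winding (\<lambda>t. (0 + complex_of_real r * cis (2 * pi * t))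
      - (horseshoe_map ^^ n) (0 + complex_of_real r * cis (2 * pi * t))) = 2^n - 1"
proof -
  have "(0 + complex_of_real r * cis (2 * pi * t)) - (horseshoe_map ^^ n) (0 + complex_of_real r * cis (2 * pi * t))
      = complex_of_real r * cis (2 * pi * t) * unit_displacement n t" for t
  proof -
    have "(horseshoe_map ^^ n) (complex_of_real r * turn t) = complex_of_real r * (horseshoe_map ^^ n) (turn t)"
      using horseshoe_map_iterate[of r n t] horseshoe_map_iterate[of 1 n t] r by simp
    moreover have "turn t * turn (- t) = 1"
      unfolding turn_add by (simp add: turn_def)
    ultimately show ?thesis
      unfolding unit_displacement_def turn_def[symmetric] by (simp add: algebra_simps)
  qed
  moreover have "unit_displacement n 1 = unit_displacement n 0"
    using turn_int_shift[of 1 0] turn_int_shift[of 1 "-1"] by (simp add: unit_displacement_def)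
  ultimately show ?thesis
    using loop_winding_cis_mult[OF net_crossings_unit_displacement[OF n]] unit_displacement_nonzero[OF n] r
    by simp
qed

theorem mainTheorem9:
  shows "\<exists>(f::complex \<Rightarrow> complex) p.
    continuous_on UNIV f \<and> f p = p \<and>
    (\<exists>U. open U \<and> p \<in> U \<and> (\<forall>x\<in>U. periodic_point f x \<longrightarrow> x = p)) \<and>
    \<not> isolated_invariant_set f {p} \<and>
    (\<forall>n::nat. n \<ge> 1 \<longrightarrow> fixed_point_index (f ^^ n) p = 2 ^ n - 1)"
proof (intro exI[of _ horseshoe_map] exI[of _ "0::complex"] conjI)
  show "continuous_on UNIV horseshoe_map"
    by (rule continuous_horseshoe_map)
  show "horseshoe_map 0 = 0"
    by simp
  show "\<exists>U. open U \<and> 0 \<in> U \<and> (\<forall>x\<in>U. periodic_point horseshoe_map x \<longrightarrow> x = 0)"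
    using periodic_point_horseshoe_map by blast
  show "\<not> isolated_invariant_set horseshoe_map {0}"
    by (rule not_isolated_horseshoe_map)
  show "\<forall>n::nat. n \<ge> 1 \<longrightarrow> fixed_point_index (horseshoe_map ^^ n) 0 = 2 ^ n - 1"
    using loop_winding_horseshoe_map by (auto intro: fixed_point_index_eqI[of 1])
qed

end
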